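(* Let $\rho_{ABC},\tau_{AC},\theta_{BC},\omega_C$ be positive definite density operators on the indicated spaces and let $\mathcal{N}=\mathcal{N}_{A\to A'}$, $\mathcal{M}=\mathcal{M}_{B\to B'}$ be quantum channels. Then $$\begin{aligned} \Delta_{\max}(\rho_{ABC};\tau_{AC},\omega_C,\theta_{BC})&\ge\Delta_{\max}(\mathcal{M}(\rho_{ABC});\tau_{AC},\omega_C,\mathcal{M}(\theta_{BC})),\\ \Delta_{\max}(\rho_{ABC};\omega_C,\tau_{AC},\theta_{BC})&\ge\Delta_{\max}(\mathcal{M}(\rho_{ABC});\omega_C,\tau_{AC},\mathcal{M}(\theta_{BC})),\\ \Delta_{\max}(\rho_{ABC};\omega_C,\theta_{BC},\tau_{AC})&\ge\Delta_{\max}(\mathcal{N}(\rho_{ABC});\omega_C,\theta_{BC},\mathcal{N}(\tau_{AC})),\\ \Delta_{\max}(\rho_{ABC};\theta_{BC},\omega_C,\tau_{AC})&\ge\Delta_{\max}(\mathcal{N}(\rho_{ABC});\theta_{BC},\omega_C,\mathcal{N}(\tau_{AC})). \end{aligned}$$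
   Context: Finite-dimensional Hilbert spaces; natural log; operators on subsystems tensored with identities; negative powers taken on the support (generalized inverse). Set $e(\tau)=e(\theta)=+1$, $e(\omega)=-1$; for an ordered triple $(X,Y,Z)$ (a permutation of operators of the types $\tau_{AC},\omega_C,\theta_{BC}$) let $K_{-1}(X,Y,Z)=X^{-e_X/2}Y^{-e_Y/2}Z^{-e_Z}Y^{-e_Y/2}X^{-e_X/2}$ and $\Delta_{\max}(\rho;X,Y,Z)\equiv\log\|\rho^{1/2}K_{-1}(X,Y,Z)\rho^{1/2}\|_\infty$; equivalently, when $K_{-1}$ is invertible, $\Delta_{\max}(\rho;X,Y,Z)=\inf\{\lambda:\rho\le e^{\lambda}K_{-1}(X,Y,Z)^{-1}\}$. E.g. $\Delta_{\max}(\rho;\tau,\omega,\theta)=\log\|\rho^{1/2}\tau^{-1/2}\omega^{1/2}\theta^{-1}\omega^{1/2}\tau^{-1/2}\rho^{1/2}\|_\infty=\inf\{\lambda:\rho\le e^\lambda\tau^{1/2}\omega^{-1/2}\theta\omega^{-1/2}\tau^{1/2}\}$. *)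

theory Defs
  imports "HOL-Analysis.Analysis"
begin

text \<open>A composite system A B C has
index type 'a \<times> 'b \<times> 'c.\<close>

type_synonym 'n op = "complex^'n^'n"

definition adj :: "('n::finite) op \<Rightarrow> 'n op" where
  "adj U = (\<chi> i j. cnj (U$j$i))"

definition hermitian :: "('n::finite) op \<Rightarrow> bool" where
  "hermitian A \<longleftrightarrow> adj A = A"

definition unitary_op :: "('n::finite) op \<Rightarrow> bool" where
  "unitary_op U \<longleftrightarrow> U ** adj U = mat 1 \<and> adj U ** U = mat 1"

definition diag_op :: "(('n::finite) \<Rightarrow> complex) \<Rightarrow> 'n op" where
  "diag_op d = (\<chi> i j. if i = j then d i else 0)"

definition cinner_vec :: "complex^('n::finite) \<Rightarrow> complex^'n \<Rightarrow> complex" where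
  "cinner_vec x y = (\<Sum>i\<in>UNIV. cnj (x$i) * y$i)"

definition posdef :: "('n::finite) op \<Rightarrow> bool" where
  "posdef A \<longleftrightarrow> hermitian A \<and>
     (\<forall>x. x \<noteq> 0 \<longrightarrow> Im (cinner_vec x (A *v x)) = 0 \<and> Re (cinner_vec x (A *v x)) > 0)"

definition mtrace :: "('n::finite) op \<Rightarrow> complex" where
  "mtrace A = (\<Sum>i\<in>UNIV. A$i$i)"

definition density :: "('n::finite) op \<Rightarrow> bool" where
  "density A \<longleftrightarrow> mtrace A = 1"

text \<open>Real power of a Hermitian operator via the spectral decomposition A = U diag(d) U*;
the power acts on the support only (eigenvalues \<le> 0 are mapped to 0), so negative powers
are generalized inverses.  The result does not depend on the chosen decomposition.\<close>

definition mpow :: "('n::finite) op \<Rightarrow> real \<Rightarrow> 'n op" where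
  "mpow A s = (SOME B. \<exists>U d. unitary_op U \<and> A = U ** diag_op (\<lambda>i. complex_of_real (d i)) ** adj U
      \<and> B = U ** diag_op (\<lambda>i. complex_of_real (if d i > 0 then d i powr s else 0)) ** adj U)"

definition opnorm :: "('n::finite) op \<Rightarrow> real" where
  "opnorm X = onorm (\<lambda>v. X *v v)"

definition smat :: "complex \<Rightarrow> ('n::finite) op \<Rightarrow> 'n op" where
  "smat c A = (\<chi> i j. c * A$i$j)"

definition munit :: "('n::finite) \<Rightarrow> 'n \<Rightarrow> 'n op" where
  "munit i j = (\<chi> k l. if k = i \<and> l = j then 1 else 0)"

text \<open>Complete positivity: positivity of all block-matrix extensions id_n \<otimes> \<Phi>.
A block matrix (X i j)_{i,j<n} is positive semidefinite iff its quadratic form is \<ge> 0.\<close>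
definition psd_block :: "nat \<Rightarrow> (nat \<Rightarrow> nat \<Rightarrow> ('n::finite) op) \<Rightarrow> bool" where
  "psd_block n X \<longleftrightarrow> (\<forall>v :: nat \<Rightarrow> complex^'n.
     Im (\<Sum>i<n. \<Sum>j<n. cinner_vec (v i) (X i j *v v j)) = 0 \<and>
     Re (\<Sum>i<n. \<Sum>j<n. cinner_vec (v i) (X i j *v v j)) \<ge> 0)"

definition quantum_channel :: "(('n::finite) op \<Rightarrow> ('m::finite) op) \<Rightarrow> bool" where
  "quantum_channel \<Phi> \<longleftrightarrow>
     (\<forall>X Y. \<Phi> (X + Y) = \<Phi> X + \<Phi> Y) \<and> (\<forall>c X. \<Phi> (smat c X) = smat c (\<Phi> X)) \<and>
     (\<forall>X. mtrace (\<Phi> X) = mtrace X) \<and>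
     (\<forall>n X. psd_block n X \<longrightarrow> psd_block n (\<lambda>i j. \<Phi> (X i j)))"

text \<open>Channel acting on the first tensor factor: \<Phi> \<otimes> id_R.\<close>
definition ext_first :: "(('a::finite) op \<Rightarrow> ('a2::finite) op) \<Rightarrow> ('a \<times> ('r::finite)) op \<Rightarrow> ('a2 \<times> 'r) op" where
  "ext_first \<Phi> X = (\<chi> p q. \<Sum>a\<in>UNIV. \<Sum>a'\<in>UNIV.
      X$(a, snd p)$(a', snd q) * \<Phi> (munit a a')$(fst p)$(fst q))"

text \<open>Channel acting on the middle factor B of A B C: id_A \<otimes> \<Phi> \<otimes> id_C.\<close>
definition ext_mid :: "(('b::finite) op \<Rightarrow> ('b2::finite) op) \<Rightarrow> (('a::finite) \<times> 'b \<times> ('c::finite)) op \<Rightarrow> ('a \<times> 'b2 \<times> 'c) op" where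
  "ext_mid \<Phi> X = (\<chi> p q. \<Sum>b\<in>UNIV. \<Sum>b'\<in>UNIV.
      X$(fst p, b, snd (snd p))$(fst q, b', snd (snd q)) * \<Phi> (munit b b')$(fst (snd p))$(fst (snd q)))"

text \<open>Embeddings of operators on subsystems into A B C (tensoring with identities).\<close>
definition embAC :: "(('a::finite) \<times> ('c::finite)) op \<Rightarrow> ('a \<times> ('b::finite) \<times> 'c) op" where
  "embAC T = (\<chi> p q. if fst (snd p) = fst (snd q)
      then T$(fst p, snd (snd p))$(fst q, snd (snd q)) else 0)"

definition embBC :: "(('b::finite) \<times> ('c::finite)) op \<Rightarrow> (('a::finite) \<times> 'b \<times> 'c) op" where
  "embBC T = (\<chi> p q. if fst p = fst q then T$(snd p)$(snd q) else 0)"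

definition embC :: "('c::finite) op \<Rightarrow> (('a::finite) \<times> ('b::finite) \<times> 'c) op" where
  "embC T = (\<chi> p q. if fst p = fst q \<and> fst (snd p) = fst (snd q) then T$(snd (snd p))$(snd (snd q)) else 0)"

datatype 'n typed_op = Tau "'n op" | Omega "'n op" | Theta "'n op"

fun top_op :: "'n typed_op \<Rightarrow> 'n op" where
  "top_op (Tau X) = X" | "top_op (Omega X) = X" | "top_op (Theta X) = X"

fun top_e :: "'n typed_op \<Rightarrow> real" where
  "top_e (Tau _) = 1" | "top_e (Omega _) = -1" | "top_e (Theta _) = 1"

definition Kminus1 :: "('n::finite) typed_op \<Rightarrow> 'n typed_op \<Rightarrow> 'n typed_op \<Rightarrow> 'n op" where
  "Kminus1 X Y Z =
     mpow (top_op X) (- top_e X / 2) ** mpow (top_op Y) (- top_e Y / 2) ** mpow (top_op Z) (- top_e Z)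
     ** mpow (top_op Y) (- top_e Y / 2) ** mpow (top_op X) (- top_e X / 2)"

definition Delta_max :: "('n::finite) op \<Rightarrow> 'n typed_op \<Rightarrow> 'n typed_op \<Rightarrow> 'n typed_op \<Rightarrow> real" where
  "Delta_max \<rho> X Y Z = ln (opnorm (mpow \<rho> (1/2) ** Kminus1 X Y Z ** mpow \<rho> (1/2)))"

end

theory Submission
  imports Defs
begin

text \<open>Write K = S Z^(-1) S* with S = X^(-e_X/2) Y^(-e_Y/2), so that exp Delta_max is
  c = \<parallel>\<rho>^(1/2) K \<rho>^(1/2)\<parallel>, the least c with \<rho> \<le> c S*^(-1) Z S^(-1) in the Loewner order.
  In each of the four inequalities the channel acts on a factor on which X and Y act trivially,
  so applying it to this Loewner bound gives \<Phi>(\<rho>) \<le> c S*^(-1) \<Phi>(Z) S^(-1). Reading the bound back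
  with the generalized inverse \<Phi>(Z)^(-1) gives \<parallel>\<Phi>(\<rho>)^(1/2) K' \<Phi>(\<rho>)^(1/2)\<parallel> \<le> c, and the same bound
  forces the support of \<Phi>(\<rho>) into that of S \<Phi>(Z) S*, so the left-hand norm is positive.\<close>

section \<open>Adjoints, inner product and operator norm\<close>

lemma adj_adj [simp]: "adj (adj A) = A"
  by (simp add: adj_def vec_eq_iff)

lemma adj_mult: "adj (A ** B) = adj B ** adj A"
  by (simp add: adj_def vec_eq_iff matrix_matrix_mult_def mult.commute)

lemma adj_diag_op_real: "adj (diag_op (\<lambda>i. complex_of_real (d i))) = diag_op (\<lambda>i. complex_of_real (d i))"
  by (simp add: adj_def vec_eq_iff diag_op_def)

lemma adj_unitary_conj: "adj (U ** F ** adj U) = U ** adj F ** adj U"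
  by (simp add: adj_mult matrix_mul_assoc)

lemma matrix_vector_mult_scaleR_complex: "A *v (t *\<^sub>R y) = t *\<^sub>R (A *v (y::complex^'n::finite))"
  by (rule linear_cmul[OF matrix_vector_mul_linear])

lemma matrix_eq_0I: "(\<And>v. X *v v = (0::complex^'n::finite)) \<Longrightarrow> X = 0"
  by (metis matrix_eq matrix_vector_mult_0)

lemma cinner_vec_adj: "cinner_vec x (A *v y) = cinner_vec (adj A *v x) y"
proof -
  have "cinner_vec x (A *v y) = (\<Sum>i\<in>UNIV. \<Sum>j\<in>UNIV. cnj (x$i) * A$i$j * y$j)"
    unfolding cinner_vec_def matrix_vector_mult_def by (simp add: sum_distrib_left mult_ac)
  also have "\<dots> = (\<Sum>j\<in>UNIV. \<Sum>i\<in>UNIV. cnj (x$i) * A$i$j * y$j)"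
    by (rule sum.swap)
  also have "\<dots> = cinner_vec (adj A *v x) y"
    unfolding cinner_vec_def matrix_vector_mult_def adj_def by (simp add: sum_distrib_left mult_ac)
  finally show ?thesis .
qed

lemma cinner_vec_add_right: "cinner_vec x (y + z) = cinner_vec x y + cinner_vec x z"
  by (simp add: cinner_vec_def algebra_simps sum.distrib)

lemma cinner_vec_add_left: "cinner_vec (y + z) x = cinner_vec y x + cinner_vec z x"
  by (simp add: cinner_vec_def algebra_simps sum.distrib)

lemma cinner_vec_diff_right: "cinner_vec x (y - z) = cinner_vec x y - cinner_vec x z"
  by (simp add: cinner_vec_def algebra_simps sum_subtractf)

lemma cinner_vec_scale_right: "cinner_vec x (c *s y) = c * cinner_vec x y"
  by (simp add: cinner_vec_def sum_distrib_left mult_ac)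

lemma cinner_vec_scale_left: "cinner_vec (c *s y) x = cnj c * cinner_vec y x"
  by (simp add: cinner_vec_def sum_distrib_left mult_ac)

lemma cinner_vec_scaleR_right: "cinner_vec x (r *\<^sub>R y) = of_real r * cinner_vec x y"
  unfolding cinner_vec_def vector_scaleR_component by (simp add: sum_distrib_left mult_ac scaleR_conv_of_real)

lemma cinner_vec_scaleR_left: "cinner_vec (r *\<^sub>R y) x = of_real r * cinner_vec y x"
  unfolding cinner_vec_def vector_scaleR_component by (simp add: sum_distrib_left mult_ac scaleR_conv_of_real)

lemma cinner_vec_zero_left [simp]: "cinner_vec 0 x = 0"
  by (simp add: cinner_vec_def)

lemma cnj_cinner_vec: "cnj (cinner_vec x y) = cinner_vec y x"
  by (simp add: cinner_vec_def mult.commute)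

lemma cnj_mult_self: "cnj z * z = complex_of_real ((cmod z)^2)"
  by (metis complex_norm_square mult.commute)

lemma cinner_vec_self: "cinner_vec x x = complex_of_real ((norm x)^2)"
proof -
  have "cinner_vec x x = (\<Sum>i\<in>UNIV. complex_of_real ((cmod (x$i))^2))"
    unfolding cinner_vec_def by (rule sum.cong) (simp_all only: cnj_mult_self)
  also have "\<dots> = complex_of_real ((norm x)^2)"
    by (simp only: norm_vec_def L2_set_def of_real_sum[symmetric] real_sqrt_pow2[OF sum_nonneg] zero_le_power2)
  finally show ?thesis .
qed

lemma cinner_vec_self_eq_0_iff [simp]: "cinner_vec x x = 0 \<longleftrightarrow> x = 0"
  by (simp add: cinner_vec_self)

lemma cinner_vec_Cauchy_Schwarz: "cmod (cinner_vec x y) \<le> norm x * norm y"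
proof -
  have "cmod (cinner_vec x y) \<le> (\<Sum>i\<in>UNIV. cmod (x$i) * cmod (y$i))"
    unfolding cinner_vec_def by (rule order_trans[OF norm_sum]) (simp add: norm_mult)
  also have "\<dots> \<le> L2_set (\<lambda>i. cmod (x$i)) UNIV * L2_set (\<lambda>i. cmod (y$i)) UNIV"
    using L2_set_mult_ineq[of "\<lambda>i. cmod (x$i)" "\<lambda>i. cmod (y$i)" UNIV] by simp
  finally show ?thesis by (simp add: norm_vec_def)
qed

lemma hermitian_cinner_vec: "hermitian A \<Longrightarrow> cinner_vec x (A *v y) = cinner_vec (A *v x) y"
  by (simp add: cinner_vec_adj hermitian_def)

lemma hermitian_qform_real: "hermitian A \<Longrightarrow> Im (cinner_vec x (A *v x)) = 0"
  by (metis Reals_cnj_iff cnj_cinner_vec complex_is_Real_iff hermitian_cinner_vec)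

lemma hermitian_mult_self_qform:
  "hermitian P \<Longrightarrow> cinner_vec x ((P ** P) *v x) = complex_of_real ((norm (P *v x))^2)"
  by (simp add: matrix_vector_mul_assoc[symmetric] hermitian_cinner_vec cinner_vec_self)

lemma hermitian_if_qform_real:
  assumes real: "\<And>x. Im (cinner_vec x (A *v x)) = 0"
  shows "hermitian A"
proof -
  define B where "B = A - adj A"
  have B_qform: "cinner_vec x (B *v x) = 0" for x
  proof -
    have "cinner_vec x (adj A *v x) = cnj (cinner_vec x (A *v x))"
      by (simp add: cinner_vec_adj cnj_cinner_vec)
    then show ?thesis using real[of x] unfolding B_def
      by (simp add: matrix_vector_mult_diff_rdistrib cinner_vec_diff_right complex_eq_iff)
  qed
  have "cinner_vec x (B *v y) = 0" for x y
  proof -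
    have "cinner_vec x (B *v y) + cinner_vec y (B *v x) = 0"
      using B_qform[of "x + y"] B_qform[of x] B_qform[of y]
      by (simp add: matrix_vector_right_distrib cinner_vec_add_left cinner_vec_add_right ac_simps)
    moreover have "\<i> * cinner_vec x (B *v y) - \<i> * cinner_vec y (B *v x) = 0"
      using B_qform[of "x + \<i> *s y"] B_qform[of x] B_qform[of y]
      by (simp add: matrix_vector_right_distrib vector_scalar_commute cinner_vec_add_left
          cinner_vec_add_right cinner_vec_scale_left cinner_vec_scale_right algebra_simps)
    ultimately show ?thesis by (simp add: algebra_simps)
  qed
  then have "B = 0"
    by (intro matrix_eq_0I) (metis cinner_vec_self_eq_0_iff)
  then show ?thesis unfolding B_def hermitian_def by simp
qed

lemma bounded_linear_matrix_vector_mult: "bounded_linear (\<lambda>v::complex^('n::finite). X *v v)"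
  by (simp add: linear_conv_bounded_linear)

lemma norm_matrix_vector_le_opnorm: "norm (X *v v) \<le> opnorm X * norm v"
  unfolding opnorm_def by (rule onorm[OF bounded_linear_matrix_vector_mult])

lemma opnorm_le: "(\<And>v. norm (X *v v) \<le> b * norm v) \<Longrightarrow> opnorm X \<le> b"
  unfolding opnorm_def by (rule onorm_le)

lemma opnorm_nonneg: "opnorm X \<ge> 0"
  unfolding opnorm_def by (rule onorm_pos_le[OF bounded_linear_matrix_vector_mult])

lemma opnorm_eq_0_iff: "opnorm X = 0 \<longleftrightarrow> X = 0"
proof
  assume "opnorm X = 0"
  then show "X = 0"
    by (intro matrix_eq_0I) (metis mult_zero_left norm_le_zero_iff norm_matrix_vector_le_opnorm)
next
  assume "X = 0"
  then show "opnorm X = 0"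
    using opnorm_le[of X 0] opnorm_nonneg[of X] by simp
qed

lemma opnorm_mult: "opnorm (A ** B) \<le> opnorm A * opnorm B"
proof (rule opnorm_le)
  fix v
  have "norm ((A ** B) *v v) \<le> opnorm A * norm (B *v v)"
    by (simp add: matrix_vector_mul_assoc[symmetric] norm_matrix_vector_le_opnorm)
  also have "\<dots> \<le> opnorm A * (opnorm B * norm v)"
    by (rule mult_left_mono[OF norm_matrix_vector_le_opnorm opnorm_nonneg])
  finally show "norm ((A ** B) *v v) \<le> opnorm A * opnorm B * norm v" by (simp add: mult_ac)
qed

lemma opnorm_square_le_adj_mult_self: "(opnorm X)^2 \<le> opnorm (adj X ** X)"
proof -
  have "opnorm X \<le> sqrt (opnorm (adj X ** X))"
  proof (rule opnorm_le)
    fix v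
    have "(norm (X *v v))^2 = Re (cinner_vec v ((adj X ** X) *v v))"
      by (simp add: cinner_vec_adj matrix_vector_mul_assoc[symmetric] cinner_vec_self)
    also have "\<dots> \<le> norm v * norm ((adj X ** X) *v v)"
      by (rule order_trans[OF complex_Re_le_cmod cinner_vec_Cauchy_Schwarz])
    also have "\<dots> \<le> norm v * (opnorm (adj X ** X) * norm v)"
      by (rule mult_left_mono[OF norm_matrix_vector_le_opnorm norm_ge_zero])
    also have "\<dots> = (sqrt (opnorm (adj X ** X)) * norm v)^2"
      using opnorm_nonneg[of "adj X ** X"] by (simp add: power_mult_distrib power2_eq_square)
    finally show "norm (X *v v) \<le> sqrt (opnorm (adj X ** X)) * norm v"
      by (rule power2_le_imp_le) (simp add: opnorm_nonneg)
  qed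
  then show ?thesis
    by (metis opnorm_nonneg power_mono real_sqrt_pow2)
qed

lemma opnorm_le_opnorm_adj: "opnorm X \<le> opnorm (adj X)"
proof -
  have "(opnorm X)^2 \<le> opnorm (adj X) * opnorm X"
    using opnorm_square_le_adj_mult_self[of X] opnorm_mult[of "adj X" X] by simp
  then show ?thesis using opnorm_nonneg[of X]
    by (cases "opnorm X = 0") (auto simp: power2_eq_square opnorm_nonneg)
qed

lemma opnorm_adj: "opnorm (adj X) = opnorm X"
  using opnorm_le_opnorm_adj[of X] opnorm_le_opnorm_adj[of "adj X"] by simp

lemma opnorm_adj_mult_self: "opnorm (adj X ** X) = (opnorm X)^2"
  using opnorm_square_le_adj_mult_self[of X] opnorm_mult[of "adj X" X] opnorm_adj[of X]
  by (simp add: power2_eq_square)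

section \<open>The spectral theorem\<close>

lemma le_quadratic_imp_zero:
  fixes R C :: real
  assumes "\<And>t. 2*t*R \<le> t^2 * C"
  shows "R = 0"
proof (rule ccontr)
  assume R: "R \<noteq> 0"
  define t where "t = R / (\<bar>C\<bar>+1)"
  have pos: "\<bar>C\<bar>+1 > 0" by simp
  have "2*t*R = 2*R^2/(\<bar>C\<bar>+1)" by (simp add: t_def power2_eq_square)
  moreover have "t^2 * C \<le> t^2 * \<bar>C\<bar>" by (simp add: mult_left_mono)
  moreover have "t^2 * \<bar>C\<bar> = R^2 * (\<bar>C\<bar>/(\<bar>C\<bar>+1)) / (\<bar>C\<bar>+1)"
    by (simp add: t_def power2_eq_square field_simps)
  moreover have "R^2 * (\<bar>C\<bar>/(\<bar>C\<bar>+1)) \<le> R^2"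
    using pos by (simp add: divide_le_eq mult_left_mono)
  ultimately have "2*R^2/(\<bar>C\<bar>+1) \<le> R^2/(\<bar>C\<bar>+1)"
    using assms[of t] pos by (smt (verit, best) divide_right_mono)
  then have "2*R^2 \<le> R^2" using pos by (simp add: divide_le_cancel)
  then show False using R zero_less_power2[of R] by linarith
qed

lemma norm_add_scaleR_orthogonal:
  assumes "cinner_vec x y = 0"
  shows "(norm (x + t *\<^sub>R y))^2 = (norm x)^2 + t^2 * (norm y)^2"
proof -
  have yx: "cinner_vec y x = 0" using assms cnj_cinner_vec[of x y] by simp
  have "complex_of_real ((norm (x + t *\<^sub>R y))^2) = cinner_vec (x + t *\<^sub>R y) (x + t *\<^sub>R y)"
    by (simp add: cinner_vec_self)
  also have "\<dots> = complex_of_real ((norm x)^2 + t^2 * (norm y)^2)"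
    unfolding cinner_vec_add_left cinner_vec_add_right cinner_vec_scaleR_left cinner_vec_scaleR_right assms yx
    by (simp add: cinner_vec_self power2_eq_square)
  finally show ?thesis by (simp only: of_real_eq_iff)
qed

locale csubspace =
  fixes W :: "(complex^'n::finite) set"
  assumes add: "x \<in> W \<Longrightarrow> y \<in> W \<Longrightarrow> x + y \<in> W"
    and scale: "x \<in> W \<Longrightarrow> c *s x \<in> W"
begin

lemma scaleR: "x \<in> W \<Longrightarrow> r *\<^sub>R x \<in> W"
proof -
  assume "x \<in> W"
  then have "complex_of_real r *s x \<in> W" by (rule scale)
  moreover have "complex_of_real r *s x = r *\<^sub>R x"
    unfolding vec_eq_iff
    by (simp only: vector_scaleR_component vector_smult_component) (simp add: scaleR_conv_of_real)
  ultimately show ?thesis by simp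
qed

lemma diff: "x \<in> W \<Longrightarrow> y \<in> W \<Longrightarrow> x - y \<in> W"
  using add[of x "(-1) *\<^sub>R y"] scaleR[of y "-1"] by simp

end

text \<open>Perturbing the maximiser within the subspace along an orthogonal direction y shows that
  the first-order term Re (cinner_vec y (A *v x)) vanishes.\<close>

lemma hermitian_max_qform_eigenvector:
  assumes h: "hermitian A" and W: "csubspace W" and inv: "\<And>y. y \<in> W \<Longrightarrow> A *v y \<in> W"
    and xW: "x \<in> W" and nx: "norm x = 1"
    and mx: "\<And>y. y \<in> W \<Longrightarrow> norm y = 1 \<Longrightarrow> Re (cinner_vec y (A *v y)) \<le> Re (cinner_vec x (A *v x))"
  shows "A *v x = Re (cinner_vec x (A *v x)) *\<^sub>R x"
proof -
  interpret csubspace W by (rule W)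
  define m where "m = Re (cinner_vec x (A *v x))"
  have first_order: "Re (cinner_vec y (A *v x)) = 0" if yW: "y \<in> W" and oy: "cinner_vec x y = 0" for y
  proof -
    define R where "R = Re (cinner_vec y (A *v x))"
    define q where "q = Re (cinner_vec y (A *v y))"
    have "2*t*R \<le> t^2 * (m * (norm y)^2 - q)" for t
    proof -
      define w where "w = x + t *\<^sub>R y"
      have wW: "w \<in> W" unfolding w_def using xW yW by (intro add scaleR)
      have nw: "(norm w)^2 = 1 + t^2 * (norm y)^2"
        unfolding w_def using norm_add_scaleR_orthogonal[OF oy, of t] nx by simp
      then have "(norm w)^2 \<ge> 1" by simp
      then have wne: "norm w > 0" by (cases "norm w = 0") auto
      define u where "u = (1 / norm w) *\<^sub>R w"
      have "Re (cinner_vec u (A *v u)) = Re (cinner_vec w (A *v w)) / (norm w)^2"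
        unfolding u_def
        by (simp add: matrix_vector_mult_scaleR_complex cinner_vec_scaleR_left cinner_vec_scaleR_right
            power2_eq_square)
      with mx[of u] wW wne have le: "Re (cinner_vec w (A *v w)) \<le> m * (norm w)^2"
        unfolding m_def u_def by (simp add: scaleR divide_le_eq)
      have "cinner_vec x (A *v y) = cnj (cinner_vec y (A *v x))"
        using hermitian_cinner_vec[OF h, of x y] cnj_cinner_vec[of y "A *v x"] by simp
      then have "Re (cinner_vec x (A *v y)) = R" unfolding R_def by simp
      then have "Re (cinner_vec w (A *v w)) = m + 2*t*R + t^2 * q"
        unfolding w_def m_def q_def
        by (simp add: matrix_vector_right_distrib matrix_vector_mult_scaleR_complex cinner_vec_add_left
            cinner_vec_add_right cinner_vec_scaleR_left cinner_vec_scaleR_right R_def power2_eq_square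
            algebra_simps)
      with le nw show ?thesis by (simp add: algebra_simps)
    qed
    then show ?thesis using le_quadratic_imp_zero unfolding R_def by blast
  qed
  define z where "z = A *v x - m *\<^sub>R x"
  have zW: "z \<in> W" unfolding z_def using xW by (intro diff inv scaleR)
  have "cinner_vec x x = 1" using nx by (simp add: cinner_vec_self)
  then have xz: "cinner_vec x z = 0"
    unfolding z_def m_def cinner_vec_diff_right cinner_vec_scaleR_right
    using hermitian_qform_real[OF h, of x] by (simp add: complex_eq_iff)
  have "cinner_vec x (\<i> *s z) = 0" by (simp add: cinner_vec_scale_right xz)
  from first_order[OF scale[OF zW] this] first_order[OF zW xz]
  have "cinner_vec z (A *v x) = 0" by (simp add: cinner_vec_scale_left complex_eq_iff)
  moreover have "cinner_vec z x = 0" using xz cnj_cinner_vec[of x z] by simp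
  ultimately have "cinner_vec z (A *v x - m *\<^sub>R x) = 0"
    by (simp only: cinner_vec_diff_right cinner_vec_scaleR_right) simp
  then have "z = 0" by (simp only: z_def[symmetric] cinner_vec_self_eq_0_iff)
  then show ?thesis unfolding z_def m_def by simp
qed

lemma hermitian_eigenvector_orthogonal:
  fixes A :: "('n::finite) op" and v :: "'n \<Rightarrow> complex^'n"
  assumes h: "hermitian A" and ev: "\<forall>i\<in>S. A *v v i = d i *\<^sub>R v i" and S: "S \<noteq> UNIV"
  shows "\<exists>x l. norm x = 1 \<and> (\<forall>i\<in>S. cinner_vec (v i) x = 0) \<and> A *v x = l *\<^sub>R x"
proof -
  define W where "W = {x::complex^'n. \<forall>i\<in>S. cinner_vec (v i) x = 0}"
  have cs: "csubspace W"
    unfolding W_def by unfold_locales (auto simp: cinner_vec_add_right cinner_vec_scale_right)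
  have inv: "A *v y \<in> W" if "y \<in> W" for y
    using that ev unfolding W_def by (simp add: hermitian_cinner_vec[OF h] cinner_vec_scaleR_left)
  \<comment> \<open>W is the kernel of a linear map into the coordinates in S, which misses coordinate j.\<close>
  define L where "L = (\<lambda>x::complex^'n. \<chi> i. if i \<in> S then cinner_vec (v i) x else 0)"
  have lin: "linear L"
  proof -
    have [simp]: "r *\<^sub>R c = complex_of_real r * c" for r c by (simp add: scaleR_conv_of_real)
    show ?thesis
      by (rule linearI) (auto simp: L_def vec_eq_iff cinner_vec_add_right cinner_vec_scaleR_right)
  qed
  obtain j where j: "j \<notin> S" using S by blast
  have "\<not> surj L"
  proof
    assume "surj L"
    then obtain x where "L x = axis j 1" by (metis surjD)
    then have "L x $ j = 1" by (simp add: axis_def)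
    then show False using j by (simp add: L_def)
  qed
  then obtain x0 where x0: "x0 \<noteq> 0" "L x0 = 0"
    using linear_injective_0[OF lin] eucl.linear_inj_imp_surj[OF lin] by blast
  have "x0 \<in> W" unfolding W_def mem_Collect_eq
  proof
    fix i assume "i \<in> S"
    with arg_cong[OF x0(2), of "\<lambda>z. z$i"] show "cinner_vec (v i) x0 = 0" by (simp add: L_def)
  qed
  define K where "K = W \<inter> sphere 0 1"
  have W_closed: "closed W"
  proof -
    have "W = (\<Inter>i\<in>S. {x. cinner_vec (v i) x = 0})" unfolding W_def by auto
    moreover have "closed {x::complex^'n. cinner_vec (v i) x = 0}" for i
      unfolding cinner_vec_def by (intro closed_Collect_eq continuous_intros)
    ultimately show ?thesis by auto
  qed
  have "compact K" unfolding K_def by (intro closed_Int_compact W_closed compact_sphere)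
  moreover have "(1 / norm x0) *\<^sub>R x0 \<in> K"
    unfolding K_def using \<open>x0 \<in> W\<close> x0 csubspace.scaleR[OF cs] by simp
  moreover have "continuous_on K (\<lambda>y. Re (cinner_vec y (A *v y)))"
    unfolding cinner_vec_def matrix_vector_mult_def by (intro continuous_intros)
  ultimately obtain xm where xm: "xm \<in> K"
    and mx: "\<And>y. y \<in> K \<Longrightarrow> Re (cinner_vec y (A *v y)) \<le> Re (cinner_vec xm (A *v xm))"
    using continuous_attains_sup[of K] by blast
  have "A *v xm = Re (cinner_vec xm (A *v xm)) *\<^sub>R xm"
    by (rule hermitian_max_qform_eigenvector[OF h cs inv]) (use xm mx in \<open>auto simp: K_def\<close>)
  then show ?thesis using xm unfolding K_def W_def by auto
qed

lemma hermitian_orthonormal_eigenvectors: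
  fixes A :: "('n::finite) op" and S :: "'n set"
  assumes h: "hermitian A"
  shows "\<exists>v d. (\<forall>i\<in>S. \<forall>k\<in>S. cinner_vec (v i) (v k) = (if i = k then 1 else 0)) \<and>
    (\<forall>i\<in>S. A *v v i = d i *\<^sub>R v i)"
  using finite[of S]
proof (induction S rule: finite_induct)
  case empty
  then show ?case by auto
next
  case (insert j S)
  then obtain v d where on: "\<forall>i\<in>S. \<forall>k\<in>S. cinner_vec (v i) (v k) = (if i = k then 1 else 0)"
    and ev: "\<forall>i\<in>S. A *v v i = d i *\<^sub>R v i" by blast
  obtain x l where x: "norm x = 1" "\<forall>i\<in>S. cinner_vec (v i) x = 0" "A *v x = l *\<^sub>R x"
    using hermitian_eigenvector_orthogonal[OF h ev] insert(2) by blast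
  have "\<forall>i\<in>S. cinner_vec x (v i) = 0" using x(2) cnj_cinner_vec by (metis complex_cnj_zero)
  moreover have "cinner_vec x x = 1" using x(1) by (simp add: cinner_vec_self)
  ultimately show ?case
    using on ev x insert(2) by (intro exI[of _ "v(j:=x)"] exI[of _ "d(j:=l)"]) auto
qed

section \<open>Functional calculus and positivity\<close>

definition spectral_decomp :: "('n::finite) op \<Rightarrow> 'n op \<Rightarrow> ('n \<Rightarrow> real) \<Rightarrow> bool" where
  "spectral_decomp A U d \<longleftrightarrow> unitary_op U \<and> A = U ** diag_op (\<lambda>i. complex_of_real (d i)) ** adj U"

lemma scaleR_complex: "r *\<^sub>R (c::complex) = complex_of_real r * c"
  by (simp add: scaleR_conv_of_real)

lemma mult_diag_op_right: "(X ** diag_op g) $ i $ k = X $ i $ k * g k"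
  by (simp add: matrix_matrix_mult_def diag_op_def if_distrib[of "\<lambda>y. _ * y"] cong: if_cong)

lemma mult_diag_op_left: "(diag_op g ** X) $ i $ k = g i * X $ i $ k"
  by (simp add: matrix_matrix_mult_def diag_op_def if_distrib[of "\<lambda>y. y * _"] cong: if_cong)

lemma diag_op_mult: "diag_op f ** diag_op g = diag_op (\<lambda>i. f i * g i)"
  by (simp add: vec_eq_iff mult_diag_op_right) (simp add: diag_op_def)

lemma unitary_conj_mult:
  "unitary_op U \<Longrightarrow> (U ** F ** adj U) ** (U ** G ** adj U) = U ** (F ** G) ** adj U"
proof -
  assume "unitary_op U"
  then have "adj U ** U = mat 1" by (simp add: unitary_op_def)
  moreover have "(U ** F ** adj U) ** (U ** G ** adj U) = U ** F ** (adj U ** U) ** G ** adj U"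
    by (simp add: matrix_mul_assoc)
  ultimately show ?thesis by (simp add: matrix_mul_assoc)
qed

lemma hermitian_spectral_decomp:
  fixes A :: "('n::finite) op"
  assumes "hermitian A"
  shows "\<exists>U d. spectral_decomp A U d"
proof -
  obtain v :: "'n \<Rightarrow> complex^'n" and d :: "'n \<Rightarrow> real"
    where on: "\<forall>i k. cinner_vec (v i) (v k) = (if i = k then 1 else 0)"
      and ev: "\<forall>i. A *v v i = d i *\<^sub>R v i"
    using hermitian_orthonormal_eigenvectors[OF assms, of UNIV] by auto
  define U :: "'n op" where "U = (\<chi> r k. v k $ r)"
  have "(adj U ** U) $ k $ l = cinner_vec (v k) (v l)" for k l
    by (simp add: U_def adj_def matrix_matrix_mult_def cinner_vec_def)
  then have "adj U ** U = mat 1" using on by (simp add: vec_eq_iff mat_def)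
  then have U: "unitary_op U" unfolding unitary_op_def using matrix_left_right_inverse by blast
  define D where "D = diag_op (\<lambda>i. complex_of_real (d i))"
  have "(A ** U) $ r $ k = (A *v v k) $ r" for r k
    by (simp add: U_def matrix_matrix_mult_def matrix_vector_mult_def)
  moreover have "(U ** D) $ r $ k = (d k *\<^sub>R v k) $ r" for r k
    unfolding D_def mult_diag_op_right vector_scaleR_component scaleR_complex by (simp add: U_def mult.commute)
  ultimately have "A ** U = U ** D" using ev by (simp add: vec_eq_iff)
  then have "A = U ** D ** adj U"
    using U unfolding unitary_op_def by (metis matrix_mul_assoc matrix_mul_rid)
  then show ?thesis using U unfolding spectral_decomp_def D_def by blast
qed

text \<open>The unitary relating two spectral decompositions only mixes eigenvectors of equal eigenvalue;
  this makes mpow independent of the decomposition chosen by SOME.\<close>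

lemma spectral_decomp_fun_unique:
  fixes d1 d2 :: "'n::finite \<Rightarrow> real" and f :: "real \<Rightarrow> complex"
  assumes "spectral_decomp A U d1" "spectral_decomp A V d2"
  shows "U ** diag_op (\<lambda>i. f (d1 i)) ** adj U = V ** diag_op (\<lambda>i. f (d2 i)) ** adj V"
proof -
  have uu: "adj U ** U = mat 1" "U ** adj U = mat 1" and vv: "adj V ** V = mat 1" "V ** adj V = mat 1"
    using assms unfolding spectral_decomp_def unitary_op_def by auto
  define W where "W = adj V ** U"
  define D1 where "D1 = diag_op (\<lambda>i. complex_of_real (d1 i))"
  define D2 where "D2 = diag_op (\<lambda>i. complex_of_real (d2 i))"
  have "W ** D1 = adj V ** (U ** D1 ** adj U) ** U"
    unfolding W_def by (simp add: matrix_mul_assoc[symmetric] uu)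
  also have "\<dots> = adj V ** (V ** D2 ** adj V) ** U"
    using assms unfolding spectral_decomp_def D1_def D2_def by simp
  also have "\<dots> = D2 ** W"
    unfolding W_def by (simp add: matrix_mul_assoc vv)
  finally have WD: "W ** D1 = D2 ** W" .
  have "W $ i $ k * f (d1 k) = f (d2 i) * W $ i $ k" for i k
  proof -
    have "W $ i $ k * complex_of_real (d1 k) = complex_of_real (d2 i) * W $ i $ k"
      using arg_cong[OF WD, of "\<lambda>X. X $ i $ k"]
      unfolding D1_def D2_def mult_diag_op_right mult_diag_op_left .
    then have "W $ i $ k = 0 \<or> d1 k = d2 i" by (simp add: mult.commute)
    then show ?thesis by auto
  qed
  then have WF: "W ** diag_op (\<lambda>i. f (d1 i)) = diag_op (\<lambda>i. f (d2 i)) ** W"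
    by (simp add: vec_eq_iff mult_diag_op_right mult_diag_op_left)
  have "U ** diag_op (\<lambda>i. f (d1 i)) ** adj U = V ** (W ** diag_op (\<lambda>i. f (d1 i))) ** adj U"
    unfolding W_def by (simp add: matrix_mul_assoc vv)
  also have "\<dots> = V ** diag_op (\<lambda>i. f (d2 i)) ** (W ** adj U)"
    by (simp add: WF matrix_mul_assoc)
  also have "W ** adj U = adj V"
    unfolding W_def by (simp add: matrix_mul_assoc[symmetric] uu)
  finally show ?thesis .
qed

definition spec_pow :: "real \<Rightarrow> real \<Rightarrow> complex" where
  "spec_pow s x = complex_of_real (if x > 0 then x powr s else 0)"

lemma spec_pow_add: "spec_pow s x * spec_pow t x = spec_pow (s + t) x"
  by (simp add: spec_pow_def powr_add)

lemma mpow_spectral_decomp: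
  assumes "spectral_decomp A U d"
  shows "mpow A s = U ** diag_op (\<lambda>i. spec_pow s (d i)) ** adj U"
proof -
  let ?P = "\<lambda>B. \<exists>U d. unitary_op U \<and> A = U ** diag_op (\<lambda>i. complex_of_real (d i)) ** adj U
      \<and> B = U ** diag_op (\<lambda>i. complex_of_real (if d i > 0 then d i powr s else 0)) ** adj U"
  have "?P (U ** diag_op (\<lambda>i. spec_pow s (d i)) ** adj U)"
    using assms unfolding spectral_decomp_def spec_pow_def by blast
  then have "?P (mpow A s)" unfolding mpow_def by (rule someI)
  then obtain V e where "spectral_decomp A V e" "mpow A s = V ** diag_op (\<lambda>i. spec_pow s (e i)) ** adj V"
    unfolding spectral_decomp_def spec_pow_def by blast
  then show ?thesis using spectral_decomp_fun_unique[OF _ assms] by metis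
qed

lemma spectral_decomp_hermitian: "spectral_decomp A U d \<Longrightarrow> hermitian A"
  unfolding hermitian_def spectral_decomp_def by (simp add: adj_unitary_conj adj_diag_op_real)

lemma hermitian_mpow: "hermitian A \<Longrightarrow> hermitian (mpow A s)"
proof -
  assume "hermitian A"
  then obtain U d where dA: "spectral_decomp A U d" using hermitian_spectral_decomp by blast
  have "mpow A s = U ** diag_op (\<lambda>i. complex_of_real (Re (spec_pow s (d i)))) ** adj U"
    by (simp add: mpow_spectral_decomp[OF dA] spec_pow_def)
  then show ?thesis by (simp add: hermitian_def adj_unitary_conj adj_diag_op_real)
qed

lemma mpow_add: "hermitian A \<Longrightarrow> mpow A s ** mpow A t = mpow A (s + t)"
proof -
  assume "hermitian A"
  then obtain U d where dA: "spectral_decomp A U d" using hermitian_spectral_decomp by blast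
  then have "unitary_op U" by (simp add: spectral_decomp_def)
  then show ?thesis
    by (simp add: mpow_spectral_decomp[OF dA] unitary_conj_mult diag_op_mult spec_pow_add)
qed

lemma unitary_adj_norm: "unitary_op U \<Longrightarrow> norm (adj U *v x) = norm x"
proof -
  assume "unitary_op U"
  then have "cinner_vec (adj U *v x) (adj U *v x) = cinner_vec x x"
    by (simp add: cinner_vec_adj[symmetric] matrix_vector_mul_assoc unitary_op_def)
  then have "(norm (adj U *v x))^2 = (norm x)^2" by (simp only: cinner_vec_self of_real_eq_iff)
  then show ?thesis by (metis norm_ge_zero power2_eq_iff_nonneg)
qed

lemma diag_op_mult_vec: "(diag_op g *v w) $ i = g i * w $ i"
  by (simp add: matrix_vector_mult_def diag_op_def if_distrib[of "\<lambda>y. y * _"] cong: if_cong)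

lemma cinner_vec_diag_op:
  "cinner_vec w (diag_op (\<lambda>i. complex_of_real (c i)) *v w) = complex_of_real (\<Sum>i\<in>UNIV. c i * (cmod (w$i))^2)"
  unfolding cinner_vec_def diag_op_mult_vec of_real_sum
  by (rule sum.cong) (simp_all only: of_real_mult, metis cnj_mult_self mult.left_commute)

lemma cinner_vec_unitary_conj:
  "cinner_vec x ((U ** F ** adj U) *v x) = cinner_vec (adj U *v x) (F *v (adj U *v x))"
  by (simp add: matrix_vector_mul_assoc[symmetric] cinner_vec_adj)

lemma spectral_decomp_qform:
  assumes "spectral_decomp A U d"
  shows "cinner_vec x (A *v x) = complex_of_real (\<Sum>i\<in>UNIV. d i * (cmod ((adj U *v x)$i))^2)"
proof -
  have A: "A = U ** diag_op (\<lambda>i. complex_of_real (d i)) ** adj U"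
    using assms unfolding spectral_decomp_def by blast
  show ?thesis unfolding A cinner_vec_unitary_conj cinner_vec_diag_op ..
qed

lemma spectral_decomp_eigenvalue:
  assumes "spectral_decomp A U d"
  shows "cinner_vec (U *v axis k 1) (A *v (U *v axis k 1)) = complex_of_real (d k)"
proof -
  have "adj U *v (U *v axis k 1) = axis k 1"
    using assms by (simp add: spectral_decomp_def unitary_op_def matrix_vector_mul_assoc)
  then show ?thesis
    by (simp add: spectral_decomp_qform[OF assms] axis_def if_distrib[of cmod] if_distrib[of "\<lambda>y. y^2"]
        if_distrib[of "\<lambda>y. _ * y"] cong: if_cong)
qed

definition psd :: "('n::finite) op \<Rightarrow> bool" where
  "psd A \<longleftrightarrow> (\<forall>x. Im (cinner_vec x (A *v x)) = 0 \<and> Re (cinner_vec x (A *v x)) \<ge> 0)"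

lemma psd_hermitian: "psd A \<Longrightarrow> hermitian A"
  by (rule hermitian_if_qform_real) (simp add: psd_def)

lemma posdef_psd: "posdef A \<Longrightarrow> psd A"
  unfolding posdef_def psd_def by (metis cinner_vec_zero_left less_eq_real_def zero_complex.sel)

lemma psd_spectral_decomp: "psd A \<Longrightarrow> \<exists>U d. spectral_decomp A U d \<and> (\<forall>k. d k \<ge> 0)"
proof -
  assume A: "psd A"
  then obtain U d where dA: "spectral_decomp A U d"
    using hermitian_spectral_decomp psd_hermitian by blast
  have "Re (cinner_vec (U *v axis k 1) (A *v (U *v axis k 1))) \<ge> 0" for k
    using A unfolding psd_def by blast
  then have "d k \<ge> 0" for k by (simp add: spectral_decomp_eigenvalue[OF dA])
  with dA show ?thesis by blast
qed

lemma posdef_spectral_decomp: "posdef A \<Longrightarrow> \<exists>U d. spectral_decomp A U d \<and> (\<forall>k. d k > 0)"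
proof -
  assume A: "posdef A"
  then obtain U d where dA: "spectral_decomp A U d"
    using hermitian_spectral_decomp posdef_def by blast
  have "d k > 0" for k
  proof -
    have "norm (U *v axis k (1::complex)) = 1"
      using unitary_adj_norm[of "adj U" "axis k 1"] dA by (simp add: spectral_decomp_def unitary_op_def)
    then have "U *v axis k (1::complex) \<noteq> 0" by auto
    with A have "Re (cinner_vec (U *v axis k 1) (A *v (U *v axis k 1))) > 0"
      unfolding posdef_def by blast
    then show ?thesis by (simp add: spectral_decomp_eigenvalue[OF dA])
  qed
  with dA show ?thesis by blast
qed

lemma spectral_decomp_posdef:
  assumes dA: "spectral_decomp A U d" and pos: "\<And>k. d k > 0"
  shows "posdef A"
  unfolding posdef_def
proof (intro conjI allI impI)
  show "hermitian A" by (rule spectral_decomp_hermitian[OF dA])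
  fix x :: "complex^'a" assume "x \<noteq> 0"
  then have "adj U *v x \<noteq> 0"
    using unitary_adj_norm[of U x] dA by (auto simp: spectral_decomp_def)
  then obtain i where "(adj U *v x) $ i \<noteq> 0" by (auto simp: vec_eq_iff)
  then have "0 < d i * (cmod ((adj U *v x)$i))^2" using pos[of i] by simp
  moreover have "0 \<le> d j * (cmod ((adj U *v x)$j))^2" for j using pos[of j] by simp
  ultimately have "(\<Sum>i\<in>UNIV. d i * (cmod ((adj U *v x)$i))^2) > 0"
    by (intro sum_pos2[of UNIV i]) auto
  then show "Im (cinner_vec x (A *v x)) = 0" "Re (cinner_vec x (A *v x)) > 0"
    by (simp_all add: spectral_decomp_qform[OF dA])
qed

lemma mpow_one: "psd A \<Longrightarrow> mpow A 1 = A"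
proof -
  assume "psd A"
  then obtain U d where dA: "spectral_decomp A U d" and nn: "\<forall>k. d k \<ge> 0"
    using psd_spectral_decomp by blast
  have "(\<lambda>i. spec_pow 1 (d i)) = (\<lambda>i. complex_of_real (d i))"
    using nn by (auto simp: spec_pow_def fun_eq_iff) (metis less_eq_real_def)
  then have "mpow A 1 = U ** diag_op (\<lambda>i. complex_of_real (d i)) ** adj U"
    by (simp add: mpow_spectral_decomp[OF dA])
  then show ?thesis using dA by (simp add: spectral_decomp_def)
qed

lemma mpow_half_mult_self: "psd A \<Longrightarrow> mpow A (1/2) ** mpow A (1/2) = A"
  by (simp add: mpow_add psd_hermitian mpow_one)

lemma mpow_zero_posdef: "posdef A \<Longrightarrow> mpow A 0 = mat 1"
proof -
  assume "posdef A"
  then obtain U d where dA: "spectral_decomp A U d" and pos: "\<forall>k. d k > 0"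
    using posdef_spectral_decomp by blast
  have "spec_pow 0 (d i) = 1" for i using pos[rule_format, of i] by (simp add: spec_pow_def)
  then have "diag_op (\<lambda>i. spec_pow 0 (d i)) = mat 1" by (simp add: diag_op_def mat_def vec_eq_iff)
  then show ?thesis
    unfolding mpow_spectral_decomp[OF dA] using dA by (simp add: spectral_decomp_def unitary_op_def)
qed

lemma mpow_inverse: "posdef A \<Longrightarrow> s + t = 0 \<Longrightarrow> mpow A s ** mpow A t = mat 1"
  by (simp add: mpow_add posdef_def mpow_zero_posdef)

text \<open>mpow A 0 is the projection onto the support of A.\<close>

lemma qform_mpow_zero_le: "hermitian A \<Longrightarrow> Re (cinner_vec y (mpow A 0 *v y)) \<le> (norm y)^2"
proof -
  assume "hermitian A"
  then obtain U d where dA: "spectral_decomp A U d" using hermitian_spectral_decomp by blast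
  have "(\<lambda>i. spec_pow 0 (d i)) = (\<lambda>i. complex_of_real (if d i > 0 then 1 else 0))"
    by (simp add: spec_pow_def fun_eq_iff)
  then have "spectral_decomp (mpow A 0) U (\<lambda>i. if d i > 0 then 1 else 0)"
    unfolding spectral_decomp_def mpow_spectral_decomp[OF dA] using dA
    by (simp add: spectral_decomp_def)
  then have "Re (cinner_vec y (mpow A 0 *v y)) = (\<Sum>i\<in>UNIV. (if d i > 0 then 1 else 0) * (cmod ((adj U *v y)$i))^2)"
    by (simp add: spectral_decomp_qform)
  also have "\<dots> \<le> (\<Sum>i\<in>UNIV. (cmod ((adj U *v y)$i))^2)"
    by (rule sum_mono) simp
  also have "\<dots> = (norm y)^2"
    using unitary_adj_norm[of U y] dA by (simp add: norm_vec_def L2_set_def sum_nonneg spectral_decomp_def)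
  finally show ?thesis .
qed

lemma psd_qform_eq_norm_mpow_half:
  "psd A \<Longrightarrow> cinner_vec x (A *v x) = complex_of_real ((norm (mpow A (1/2) *v x))^2)"
  by (metis hermitian_mult_self_qform[where P = "mpow A (1/2)"] hermitian_mpow psd_hermitian
      mpow_half_mult_self)

lemma mtrace_posdef_nonzero: "posdef A \<Longrightarrow> mtrace A \<noteq> 0"
proof -
  assume A: "posdef A"
  have "A $ i $ i = cinner_vec (axis i 1) (A *v axis i 1)" for i
    by (simp add: cinner_vec_def matrix_vector_mult_def axis_def if_distrib[of cnj]
        if_distrib[of "\<lambda>y. y * _"] if_distrib[of "\<lambda>y. _ * y"] cong: if_cong)
  then have "Re (A $ i $ i) > 0" for i
    using A unfolding posdef_def by (metis axis_eq_0_iff zero_neq_one)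
  then have "Re (mtrace A) > 0"
    unfolding mtrace_def Re_sum by (intro sum_pos) auto
  then show ?thesis by auto
qed

section \<open>Ampliations\<close>

text \<open>emb_op \<pi> \<kappa> T is 1 \<otimes> T when the index type is split by (\<kappa>, \<pi>) into an identity part
  and the part on which T acts.\<close>

definition emb_op :: "(('n::finite) \<Rightarrow> ('s::finite)) \<Rightarrow> ('n \<Rightarrow> 'k) \<Rightarrow> 's op \<Rightarrow> 'n op" where
  "emb_op \<pi> \<kappa> T = (\<chi> p q. if \<kappa> p = \<kappa> q then T $ (\<pi> p) $ (\<pi> q) else 0)"

definition tensor_split :: "('n \<Rightarrow> 's) \<Rightarrow> ('n \<Rightarrow> 'k) \<Rightarrow> bool" where
  "tensor_split \<pi> \<kappa> \<longleftrightarrow> bij (\<lambda>p. (\<kappa> p, \<pi> p))"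

lemma tensor_split_bij_betw:
  assumes "tensor_split \<pi> \<kappa>"
  shows "bij_betw \<pi> {p. \<kappa> p = k} UNIV"
proof (rule bij_betwI')
  have inj: "inj (\<lambda>p. (\<kappa> p, \<pi> p))" and surj: "surj (\<lambda>p. (\<kappa> p, \<pi> p))"
    using assms unfolding tensor_split_def bij_def by auto
  show "(\<pi> p = \<pi> q) = (p = q)" if "p \<in> {p. \<kappa> p = k}" "q \<in> {p. \<kappa> p = k}" for p q
    using that injD[OF inj, of p q] by auto
  show "\<exists>p\<in>{p. \<kappa> p = k}. t = \<pi> p" for t
    using surjD[OF surj, of "(k, t)"] by auto
qed simp

lemma tensor_split_inj: "tensor_split \<pi> \<kappa> \<Longrightarrow> \<kappa> p = \<kappa> q \<Longrightarrow> \<pi> p = \<pi> q \<Longrightarrow> p = q"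
  unfolding tensor_split_def bij_def by (auto dest: injD)

lemma emb_op_mult:
  assumes "tensor_split \<pi> \<kappa>"
  shows "emb_op \<pi> \<kappa> A ** emb_op \<pi> \<kappa> B = emb_op \<pi> \<kappa> (A ** B)"
proof -
  have "(\<Sum>s\<in>UNIV. (if \<kappa> p = \<kappa> s then A $ \<pi> p $ \<pi> s else 0) * (if \<kappa> s = \<kappa> q then B $ \<pi> s $ \<pi> q else 0))
        = (if \<kappa> p = \<kappa> q then (\<Sum>u\<in>UNIV. A $ \<pi> p $ u * B $ u $ \<pi> q) else 0)" for p q
  proof (cases "\<kappa> p = \<kappa> q")
    case True
    have "(\<Sum>s\<in>UNIV. (if \<kappa> p = \<kappa> s then A $ \<pi> p $ \<pi> s else 0) * (if \<kappa> s = \<kappa> q then B $ \<pi> s $ \<pi> q else 0))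
        = (\<Sum>s\<in>UNIV. if \<kappa> s = \<kappa> p then A $ \<pi> p $ \<pi> s * B $ \<pi> s $ \<pi> q else 0)"
      using True by (intro sum.cong) auto
    also have "\<dots> = (\<Sum>s\<in>{s. \<kappa> s = \<kappa> p}. A $ \<pi> p $ \<pi> s * B $ \<pi> s $ \<pi> q)"
      by (simp add: sum.inter_filter[symmetric])
    also have "\<dots> = (\<Sum>u\<in>UNIV. A $ \<pi> p $ u * B $ u $ \<pi> q)"
      by (rule sum.reindex_bij_betw[OF tensor_split_bij_betw[OF assms]])
    finally show ?thesis using True by simp
  next
    case False
    then show ?thesis by (simp, intro sum.neutral) auto
  qed
  then show ?thesis by (simp add: emb_op_def matrix_matrix_mult_def vec_eq_iff)
qed

lemma emb_op_adj: "adj (emb_op \<pi> \<kappa> A) = emb_op \<pi> \<kappa> (adj A)"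
  by (auto simp: emb_op_def adj_def vec_eq_iff)

lemma emb_op_mat_1: "tensor_split \<pi> \<kappa> \<Longrightarrow> emb_op \<pi> \<kappa> (mat 1) = mat 1"
  by (auto simp: emb_op_def mat_def vec_eq_iff dest: tensor_split_inj)

lemma emb_op_diag_op: "tensor_split \<pi> \<kappa> \<Longrightarrow> emb_op \<pi> \<kappa> (diag_op g) = diag_op (\<lambda>p. g (\<pi> p))"
  by (auto simp: emb_op_def diag_op_def vec_eq_iff dest: tensor_split_inj)

text \<open>An abstraction of the maps T \<mapsto> 1 \<otimes> T (embAC, embBC, embC): unital *-homomorphisms
  taking diagonal matrices to diagonal matrices.\<close>

definition ampliation :: "(('s::finite) op \<Rightarrow> ('n::finite) op) \<Rightarrow> bool" where
  "ampliation E \<longleftrightarrow> (\<forall>X Y. E X ** E Y = E (X ** Y)) \<and> E (mat 1) = mat 1 \<and>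
     (\<forall>X. adj (E X) = E (adj X)) \<and> (\<exists>\<pi>. \<forall>g. E (diag_op g) = diag_op (\<lambda>p. g (\<pi> p)))"

lemma ampliation_emb_op: "tensor_split \<pi> \<kappa> \<Longrightarrow> ampliation (emb_op \<pi> \<kappa>)"
  unfolding ampliation_def using emb_op_mult emb_op_mat_1 emb_op_adj emb_op_diag_op by blast

lemma ampliation_spectral_decomp:
  assumes E: "ampliation E" and dA: "spectral_decomp A U d"
  shows "\<exists>\<pi>. spectral_decomp (E A) (E U) (\<lambda>p. d (\<pi> p)) \<and>
    (\<forall>s. mpow (E A) s = E (mpow A s))"
proof -
  obtain \<pi> where diag: "\<And>g. E (diag_op g) = diag_op (\<lambda>p. g (\<pi> p))"
    using E unfolding ampliation_def by blast
  have mult: "\<And>X Y. E X ** E Y = E (X ** Y)" and adj: "\<And>X. adj (E X) = E (adj X)"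
    and one: "E (mat 1) = mat 1"
    using E unfolding ampliation_def by blast+
  have conj: "E (U ** diag_op g ** adj U) = E U ** diag_op (\<lambda>p. g (\<pi> p)) ** adj (E U)" for g
    by (simp add: mult[symmetric] adj diag)
  have dEA: "spectral_decomp (E A) (E U) (\<lambda>p. d (\<pi> p))"
    using dA unfolding spectral_decomp_def unitary_op_def by (simp add: adj mult one conj)
  moreover have "mpow (E A) s = E (mpow A s)" for s
    by (simp add: mpow_spectral_decomp[OF dEA] mpow_spectral_decomp[OF dA] conj)
  ultimately show ?thesis by blast
qed

lemma mpow_ampliation: "ampliation E \<Longrightarrow> hermitian A \<Longrightarrow> mpow (E A) s = E (mpow A s)"
  using ampliation_spectral_decomp hermitian_spectral_decomp by blast

lemma posdef_ampliation:
  assumes E: "ampliation E" and A: "posdef A"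
  shows "posdef (E A)"
proof -
  obtain U d where dA: "spectral_decomp A U d" and pos: "\<forall>k. d k > 0"
    using posdef_spectral_decomp[OF A] by blast
  then obtain \<pi> where "spectral_decomp (E A) (E U) (\<lambda>p. d (\<pi> p))"
    using ampliation_spectral_decomp[OF E dA] by blast
  then show ?thesis using pos by (intro spectral_decomp_posdef) auto
qed

abbreviation emb_snd :: "('r::finite) op \<Rightarrow> (('a::finite) \<times> 'r) op" where
  "emb_snd \<equiv> emb_op snd fst"

lemma tensor_split_snd: "tensor_split snd fst"
  by (simp add: tensor_split_def bij_id[unfolded id_def])

lemma embAC_eq_emb_op: "embAC = emb_op (\<lambda>p. (fst p, snd (snd p))) (\<lambda>p. fst (snd p))"
  by (simp add: embAC_def emb_op_def fun_eq_iff)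

lemma embBC_eq_emb_snd: "embBC = emb_snd"
  by (simp add: embBC_def emb_op_def fun_eq_iff)

lemma ampliation_embAC:
  "ampliation (embAC :: (('a::finite) \<times> ('c::finite)) op \<Rightarrow> ('a \<times> ('b::finite) \<times> 'c) op)"
proof -
  have "bij (\<lambda>p::('a::finite) \<times> ('b::finite) \<times> ('c::finite). (fst (snd p), fst p, snd (snd p)))"
    by (rule o_bij[of "\<lambda>(b, a, c). (a, b, c)"]) (auto simp: fun_eq_iff)
  then show ?thesis
    unfolding embAC_eq_emb_op by (intro ampliation_emb_op) (simp add: tensor_split_def)
qed

lemma ampliation_emb_snd: "ampliation emb_snd"
  by (rule ampliation_emb_op[OF tensor_split_snd])

lemma ampliation_embBC: "ampliation embBC"
  unfolding embBC_eq_emb_snd by (rule ampliation_emb_snd)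

lemma embC_eq_embAC: "embC W = embAC (emb_snd W)"
  by (auto simp: embC_def embAC_def emb_op_def vec_eq_iff)

lemma embC_eq_embBC: "embC W = embBC (emb_snd W)"
  by (auto simp: embC_def embBC_def emb_op_def vec_eq_iff)

section \<open>Channels acting on one factor\<close>

lemma quantum_channel_add: "quantum_channel \<Phi> \<Longrightarrow> \<Phi> (X + Y) = \<Phi> X + \<Phi> Y"
  by (simp add: quantum_channel_def)

lemma quantum_channel_smat: "quantum_channel \<Phi> \<Longrightarrow> \<Phi> (smat c X) = smat c (\<Phi> X)"
  by (simp add: quantum_channel_def)

lemma quantum_channel_zero: "quantum_channel \<Phi> \<Longrightarrow> \<Phi> 0 = 0"
  using quantum_channel_add[of \<Phi> 0 0] by simp

lemma quantum_channel_sum: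
  assumes ch: "quantum_channel \<Phi>"
  shows "\<Phi> (\<Sum>k\<in>K. f k) = (\<Sum>k\<in>K. \<Phi> (f k))"
  by (induction K rule: infinite_finite_induct)
    (simp_all add: quantum_channel_zero[OF ch] quantum_channel_add[OF ch])

lemma matrix_munit_expansion: "(M :: ('a::finite) op) = (\<Sum>a\<in>UNIV. \<Sum>a'\<in>UNIV. smat (M $ a $ a') (munit a a'))"
proof -
  have "(\<Sum>a\<in>UNIV. \<Sum>a'\<in>UNIV. smat (M $ a $ a') (munit a a')) $ i $ j = M $ i $ j" for i j
  proof -
    have "(\<Sum>a\<in>UNIV. \<Sum>a'\<in>UNIV. smat (M $ a $ a') (munit a a')) $ i $ j
        = (\<Sum>a\<in>UNIV. \<Sum>a'\<in>UNIV. if i = a \<and> j = a' then M $ a $ a' else 0)"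
      by (simp add: sum_component smat_def munit_def if_distrib[of "\<lambda>y. _ * y"] cong: if_cong)
    also have "\<dots> = (\<Sum>a\<in>UNIV. if i = a then (\<Sum>a'\<in>UNIV. if j = a' then M $ a $ a' else 0) else 0)"
      by (rule sum.cong[OF refl]) auto
    finally show ?thesis by simp
  qed
  then show ?thesis by (simp add: vec_eq_iff)
qed

lemma quantum_channel_entry:
  assumes "quantum_channel \<Phi>"
  shows "\<Phi> M $ i $ j = (\<Sum>a\<in>UNIV. \<Sum>a'\<in>UNIV. M $ a $ a' * \<Phi> (munit a a') $ i $ j)"
proof -
  have "\<Phi> M = (\<Sum>a\<in>UNIV. \<Sum>a'\<in>UNIV. smat (M $ a $ a') (\<Phi> (munit a a')))"
    by (subst matrix_munit_expansion)
      (simp add: quantum_channel_sum[OF assms] quantum_channel_smat[OF assms])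
  then show ?thesis by (simp add: sum_component smat_def)
qed

lemma sum_UNIV_prod_swap:
  "(\<Sum>p\<in>(UNIV::(('a::finite) \<times> ('r::finite)) set). f p) = (\<Sum>r\<in>UNIV. \<Sum>a\<in>UNIV. f (a, r))"
proof -
  have "(\<Sum>p\<in>(UNIV::('a \<times> 'r) set). f p) = (\<Sum>a\<in>UNIV. \<Sum>r\<in>UNIV. f (a, r))"
    by (simp only: UNIV_Times_UNIV[symmetric] sum.cartesian_product')
  then show ?thesis by (simp only: sum.swap[of _ "UNIV::'a set"])
qed

definition block_matrix :: "(('r::finite) \<Rightarrow> 'r \<Rightarrow> ('a::finite) op) \<Rightarrow> ('a \<times> 'r) op" where
  "block_matrix F = (\<chi> p q. F (snd p) (snd q) $ fst p $ fst q)"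

definition block_vector :: "(('r::finite) \<Rightarrow> complex^('a::finite)) \<Rightarrow> complex^('a \<times> 'r)" where
  "block_vector u = (\<chi> p. u (snd p) $ fst p)"

definition psd_blocks :: "(('r::finite) \<Rightarrow> 'r \<Rightarrow> ('a::finite) op) \<Rightarrow> bool" where
  "psd_blocks F \<longleftrightarrow> (\<forall>u. Im (\<Sum>r\<in>UNIV. \<Sum>r'\<in>UNIV. cinner_vec (u r) (F r r' *v u r')) = 0 \<and>
     Re (\<Sum>r\<in>UNIV. \<Sum>r'\<in>UNIV. cinner_vec (u r) (F r r' *v u r')) \<ge> 0)"

lemma block_matrix_mult_block_vector:
  "(block_matrix F *v block_vector u) $ (a, r) = (\<Sum>r'\<in>UNIV. \<Sum>a'\<in>UNIV. F r r' $ a $ a' * u r' $ a')"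
  unfolding matrix_vector_mult_def vec_lambda_beta sum_UNIV_prod_swap
  by (simp add: block_matrix_def block_vector_def)

lemma cinner_vec_block_vector:
  "cinner_vec (block_vector u) z = (\<Sum>r\<in>UNIV. \<Sum>a\<in>UNIV. cnj (u r $ a) * z $ (a, r))"
  unfolding cinner_vec_def sum_UNIV_prod_swap by (simp add: block_vector_def)

lemma cinner_vec_block_matrix:
  "cinner_vec (block_vector u) (block_matrix F *v block_vector u)
    = (\<Sum>r\<in>UNIV. \<Sum>r'\<in>UNIV. cinner_vec (u r) (F r r' *v u r'))"
proof -
  have "(\<Sum>r\<in>UNIV. \<Sum>r'\<in>UNIV. cinner_vec (u r) (F r r' *v u r'))
      = (\<Sum>r\<in>UNIV. \<Sum>r'\<in>UNIV. \<Sum>a\<in>UNIV. cnj (u r $ a) * (\<Sum>a'\<in>UNIV. F r r' $ a $ a' * u r' $ a'))"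
    unfolding cinner_vec_def matrix_vector_mult_def vec_lambda_beta ..
  also have "\<dots> = (\<Sum>r\<in>UNIV. \<Sum>a\<in>UNIV. \<Sum>r'\<in>UNIV. cnj (u r $ a) * (\<Sum>a'\<in>UNIV. F r r' $ a $ a' * u r' $ a'))"
    by (rule sum.cong[OF refl], rule sum.swap)
  also have "\<dots> = (\<Sum>r\<in>UNIV. \<Sum>a\<in>UNIV. cnj (u r $ a) * (\<Sum>r'\<in>UNIV. \<Sum>a'\<in>UNIV. F r r' $ a $ a' * u r' $ a'))"
    by (simp add: sum_distrib_left)
  also have "\<dots> = cinner_vec (block_vector u) (block_matrix F *v block_vector u)"
    by (simp only: cinner_vec_block_vector block_matrix_mult_block_vector)
  finally show ?thesis ..
qed

lemma psd_block_matrix_iff: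
  fixes F :: "('r::finite) \<Rightarrow> 'r \<Rightarrow> ('a::finite) op"
  shows "psd (block_matrix F) \<longleftrightarrow> psd_blocks F"
proof -
  have "x = block_vector (\<lambda>r. \<chi> a. x $ (a, r))" for x :: "complex^(('a::finite) \<times> ('r::finite))"
    by (simp add: block_vector_def vec_eq_iff)
  then have all_block: "(\<forall>x::complex^(('a::finite) \<times> ('r::finite)). P x) \<longleftrightarrow> (\<forall>u. P (block_vector u))" for P by metis
  show ?thesis unfolding psd_def psd_blocks_def cinner_vec_block_matrix[symmetric] by (rule all_block)
qed

text \<open>psd_block of Defs indexes blocks by an initial segment of the naturals.\<close>

lemma psd_block_iff_psd_blocks:
  fixes F :: "('r::finite) \<Rightarrow> 'r \<Rightarrow> ('a::finite) op"
  assumes h: "bij_betw h {..<n} (UNIV::'r set)"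
  shows "psd_block n (\<lambda>i j. F (h i) (h j)) \<longleftrightarrow> psd_blocks F"
proof -
  define g where "g = inv_into {..<n} h"
  define Q where "Q u = (\<Sum>r\<in>UNIV. \<Sum>r'\<in>UNIV. cinner_vec (u r) (F r r' *v u r'))" for u
  have reindex: "(\<Sum>i<n. \<Sum>j<n. G (h i) (h j)) = (\<Sum>r\<in>UNIV. \<Sum>r'\<in>UNIV. G r r')"
    for G :: "'r \<Rightarrow> 'r \<Rightarrow> complex"
  proof -
    have "(\<Sum>i<n. \<Sum>j<n. G (h i) (h j)) = (\<Sum>i<n. \<Sum>r'\<in>UNIV. G (h i) r')"
      by (rule sum.cong[OF refl]) (rule sum.reindex_bij_betw[OF h])
    also have "\<dots> = (\<Sum>r\<in>UNIV. \<Sum>r'\<in>UNIV. G r r')"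
      using sum.reindex_bij_betw[OF h, where g = "\<lambda>r. \<Sum>r'\<in>UNIV. G r r'"] by simp
    finally show ?thesis .
  qed
  have block_sum: "(\<Sum>i<n. \<Sum>j<n. cinner_vec (v i) (F (h i) (h j) *v v j)) = Q (\<lambda>r. v (g r))" for v
  proof -
    have "g (h i) = i" if "i < n" for i
      using that h unfolding g_def bij_betw_def by (simp add: inv_into_f_f)
    then have "(\<Sum>i<n. \<Sum>j<n. cinner_vec (v i) (F (h i) (h j) *v v j))
        = (\<Sum>i<n. \<Sum>j<n. cinner_vec (v (g (h i))) (F (h i) (h j) *v v (g (h j))))"
      by (intro sum.cong) auto
    then show ?thesis
      unfolding Q_def using reindex[of "\<lambda>r r'. cinner_vec (v (g r)) (F r r' *v v (g r'))"] by (rule trans)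
  qed
  have "h (g r) = r" for r
    using h f_inv_into_f[of r h "{..<n}"] unfolding g_def bij_betw_def by simp
  then have hg: "(\<lambda>r. u (h (g r))) = u" for u :: "'r \<Rightarrow> complex^'a" by simp
  have "psd_block n (\<lambda>i j. F (h i) (h j)) \<longleftrightarrow> (\<forall>v. Im (Q (\<lambda>r. v (g r))) = 0 \<and> Re (Q (\<lambda>r. v (g r))) \<ge> 0)"
    unfolding psd_block_def block_sum ..
  also have "\<dots> \<longleftrightarrow> (\<forall>u. Im (Q u) = 0 \<and> Re (Q u) \<ge> 0)"
  proof
    assume H: "\<forall>v. Im (Q (\<lambda>r. v (g r))) = 0 \<and> Re (Q (\<lambda>r. v (g r))) \<ge> 0"
    show "\<forall>u. Im (Q u) = 0 \<and> Re (Q u) \<ge> 0"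
    proof
      fix u :: "'r \<Rightarrow> complex^'a"
      from H[rule_format, of "\<lambda>i. u (h i)"] show "Im (Q u) = 0 \<and> Re (Q u) \<ge> 0"
        by (simp only: hg)
    qed
  qed blast
  also have "\<dots> \<longleftrightarrow> psd_blocks F"
    unfolding psd_blocks_def Q_def ..
  finally show ?thesis .
qed

lemma quantum_channel_psd_blocks:
  fixes F :: "('r::finite) \<Rightarrow> 'r \<Rightarrow> ('a::finite) op" and \<Phi> :: "'a op \<Rightarrow> ('a2::finite) op"
  assumes "quantum_channel \<Phi>" and "psd_blocks F"
  shows "psd_blocks (\<lambda>r r'. \<Phi> (F r r'))"
proof -
  obtain h where h: "bij_betw h {..<CARD('r)} (UNIV::'r set)"
    using ex_bij_betw_nat_finite[of "UNIV::'r set"] by (auto simp: atLeast0LessThan)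
  have ch: "\<And>n X. psd_block n X \<Longrightarrow> psd_block n (\<lambda>i j. \<Phi> (X i j))"
    using assms(1) unfolding quantum_channel_def by blast
  have "psd_block CARD('r) (\<lambda>i j. F (h i) (h j))"
    using assms(2) psd_block_iff_psd_blocks[OF h, of F] by simp
  from ch[OF this] show ?thesis
    using psd_block_iff_psd_blocks[OF h, of "\<lambda>r r'. \<Phi> (F r r')"] by simp
qed

lemma ext_first_block_matrix:
  assumes "quantum_channel \<Phi>"
  shows "ext_first \<Phi> X = block_matrix (\<lambda>r r'. \<Phi> (\<chi> a a'. X $ (a, r) $ (a', r')))"
proof -
  have "ext_first \<Phi> X $ p $ q = block_matrix (\<lambda>r r'. \<Phi> (\<chi> a a'. X $ (a, r) $ (a', r'))) $ p $ q" for p q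
    unfolding block_matrix_def ext_first_def vec_lambda_beta
      quantum_channel_entry[OF assms, of "\<chi> a a'. X $ (a, snd p) $ (a', snd q)"]
    by simp
  then show ?thesis by (simp add: vec_eq_iff)
qed

lemma psd_ext_first:
  assumes ch: "quantum_channel \<Phi>" and X: "psd X"
  shows "psd (ext_first \<Phi> X)"
proof -
  have "block_matrix (\<lambda>r r'. \<chi> a a'. X $ (a, r) $ (a', r')) = X"
    by (simp add: block_matrix_def vec_eq_iff)
  with X have "psd_blocks (\<lambda>r r'. \<chi> a a'. X $ (a, r) $ (a', r'))"
    by (simp add: psd_block_matrix_iff[symmetric])
  then show ?thesis
    unfolding ext_first_block_matrix[OF ch] psd_block_matrix_iff
    by (rule quantum_channel_psd_blocks[OF ch])
qed

lemma mtrace_munit: "mtrace (munit a a' :: ('a::finite) op) = (if a = a' then 1 else 0)"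
proof (cases "a = a'")
  case True
  then show ?thesis by (simp add: mtrace_def munit_def)
next
  case False
  then show ?thesis by (simp add: mtrace_def munit_def, intro sum.neutral) auto
qed

lemma mtrace_ext_first:
  fixes \<Phi> :: "('a::finite) op \<Rightarrow> ('a2::finite) op" and X :: "('a \<times> ('r::finite)) op"
  assumes ch: "quantum_channel \<Phi>"
  shows "mtrace (ext_first \<Phi> X) = mtrace X"
proof -
  have "mtrace (\<Phi> X) = mtrace X" for X
    using ch by (simp add: quantum_channel_def)
  then have tr: "mtrace (\<Phi> (munit a a')) = (if a = a' then 1 else 0)" for a a'
    by (simp add: mtrace_munit)
  have "mtrace (ext_first \<Phi> X)
      = (\<Sum>r\<in>UNIV. \<Sum>a\<in>UNIV. \<Sum>a'\<in>UNIV. X $ (a, r) $ (a', r) * mtrace (\<Phi> (munit a a')))"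
  proof -
    have "(\<Sum>b\<in>UNIV. \<Sum>a\<in>UNIV. \<Sum>a'\<in>UNIV. X $ (a, r) $ (a', r) * \<Phi> (munit a a') $ b $ b)
        = (\<Sum>a\<in>UNIV. \<Sum>a'\<in>UNIV. X $ (a, r) $ (a', r) * mtrace (\<Phi> (munit a a')))" for r
    proof -
      have "(\<Sum>b\<in>UNIV. \<Sum>a\<in>UNIV. \<Sum>a'\<in>UNIV. X $ (a, r) $ (a', r) * \<Phi> (munit a a') $ b $ b)
          = (\<Sum>a\<in>UNIV. \<Sum>a'\<in>UNIV. \<Sum>b\<in>UNIV. X $ (a, r) $ (a', r) * \<Phi> (munit a a') $ b $ b)"
        by (subst sum.swap) (rule sum.cong[OF refl], rule sum.swap)
      then show ?thesis by (simp add: mtrace_def sum_distrib_left)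
    qed
    then show ?thesis
      unfolding mtrace_def[of "ext_first \<Phi> X"] sum_UNIV_prod_swap by (simp add: ext_first_def)
  qed
  also have "\<dots> = (\<Sum>r\<in>UNIV. \<Sum>a\<in>UNIV. \<Sum>a'\<in>UNIV. X $ (a, r) $ (a', r) * (if a = a' then 1 else 0))"
    by (simp only: tr)
  also have "\<dots> = mtrace X"
    unfolding mtrace_def sum_UNIV_prod_swap by (simp add: if_distrib[of "\<lambda>y. _ * y"] cong: if_cong)
  finally show ?thesis .
qed

lemma ext_first_add: "ext_first \<Phi> (X + Y) = ext_first \<Phi> X + ext_first \<Phi> Y"
  by (simp add: ext_first_def vec_eq_iff distrib_right sum.distrib)

lemma ext_first_smat: "ext_first \<Phi> (smat c X) = smat c (ext_first \<Phi> X)"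
  by (simp add: ext_first_def smat_def vec_eq_iff sum_distrib_left mult_ac)

lemma emb_snd_mult_entry:
  "(emb_snd A ** Y) $ p $ q = (\<Sum>t\<in>UNIV. A $ snd p $ t * Y $ (fst p, t) $ q)"
  "(Y ** emb_snd A) $ p $ q = (\<Sum>t\<in>UNIV. Y $ p $ (fst q, t) * A $ t $ snd q)"
proof -
  have "(emb_snd A ** Y) $ p $ q = (\<Sum>t\<in>UNIV. \<Sum>b\<in>UNIV. emb_snd A $ p $ (b, t) * Y $ (b, t) $ q)"
    unfolding matrix_matrix_mult_def vec_lambda_beta by (rule sum_UNIV_prod_swap)
  also have "\<dots> = (\<Sum>t\<in>UNIV. \<Sum>b\<in>UNIV. (if fst p = b then A $ snd p $ t else 0) * Y $ (b, t) $ q)"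
    by (simp add: emb_op_def prod.sel cong: if_cong)
  finally show "(emb_snd A ** Y) $ p $ q = (\<Sum>t\<in>UNIV. A $ snd p $ t * Y $ (fst p, t) $ q)"
    by (simp add: if_distrib[of "\<lambda>y. y * _"] cong: if_cong)
  have "(Y ** emb_snd A) $ p $ q = (\<Sum>t\<in>UNIV. \<Sum>b\<in>UNIV. Y $ p $ (b, t) * emb_snd A $ (b, t) $ q)"
    unfolding matrix_matrix_mult_def vec_lambda_beta by (rule sum_UNIV_prod_swap)
  also have "\<dots> = (\<Sum>t\<in>UNIV. \<Sum>b\<in>UNIV. Y $ p $ (b, t) * (if b = fst q then A $ t $ snd q else 0))"
    by (simp add: emb_op_def prod.sel cong: if_cong)
  finally show "(Y ** emb_snd A) $ p $ q = (\<Sum>t\<in>UNIV. Y $ p $ (fst q, t) * A $ t $ snd q)"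
    by (simp add: if_distrib[of "\<lambda>y. _ * y"] cong: if_cong)
qed

lemma sum_swap3:
  "(\<Sum>a\<in>A. \<Sum>a'\<in>A'. \<Sum>t\<in>T. f a a' t) = (\<Sum>t\<in>T. \<Sum>a\<in>A. \<Sum>a'\<in>A'. f a a' t)"
  by (subst sum.swap) (rule sum.cong[OF refl], rule sum.swap)

lemma ext_first_emb_snd_mult:
  "ext_first \<Phi> (emb_snd A ** Y) = emb_snd A ** ext_first \<Phi> Y"
  "ext_first \<Phi> (Y ** emb_snd A) = ext_first \<Phi> Y ** emb_snd A"
proof -
  have "ext_first \<Phi> (emb_snd A ** Y) $ p $ q = (emb_snd A ** ext_first \<Phi> Y) $ p $ q" for p q
  proof -
    have "ext_first \<Phi> (emb_snd A ** Y) $ p $ q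
        = (\<Sum>a\<in>UNIV. \<Sum>a'\<in>UNIV. \<Sum>t\<in>UNIV. A $ snd p $ t * Y $ (a, t) $ (a', snd q) * \<Phi> (munit a a') $ fst p $ fst q)"
      unfolding ext_first_def vec_lambda_beta emb_snd_mult_entry by (simp add: sum_distrib_right)
    also have "\<dots> = (emb_snd A ** ext_first \<Phi> Y) $ p $ q"
      unfolding emb_snd_mult_entry ext_first_def vec_lambda_beta
      by (subst sum_swap3) (simp add: sum_distrib_left mult_ac)
    finally show ?thesis .
  qed
  then show "ext_first \<Phi> (emb_snd A ** Y) = emb_snd A ** ext_first \<Phi> Y" by (simp add: vec_eq_iff)
  have "ext_first \<Phi> (Y ** emb_snd A) $ p $ q = (ext_first \<Phi> Y ** emb_snd A) $ p $ q" for p q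
  proof -
    have "ext_first \<Phi> (Y ** emb_snd A) $ p $ q
        = (\<Sum>a\<in>UNIV. \<Sum>a'\<in>UNIV. \<Sum>t\<in>UNIV. Y $ (a, snd p) $ (a', t) * A $ t $ snd q * \<Phi> (munit a a') $ fst p $ fst q)"
      unfolding ext_first_def vec_lambda_beta emb_snd_mult_entry by (simp add: sum_distrib_right)
    also have "\<dots> = (ext_first \<Phi> Y ** emb_snd A) $ p $ q"
      unfolding emb_snd_mult_entry ext_first_def vec_lambda_beta
      by (subst sum_swap3) (simp add: sum_distrib_left sum_distrib_right mult_ac)
    finally show ?thesis .
  qed
  then show "ext_first \<Phi> (Y ** emb_snd A) = ext_first \<Phi> Y ** emb_snd A" by (simp add: vec_eq_iff)
qed

definition swap12 :: "'a \<times> 'b \<times> 'c \<Rightarrow> 'b \<times> 'a \<times> 'c" where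
  "swap12 p = (fst (snd p), fst p, snd (snd p))"

lemma bij_swap12: "bij swap12"
  by (rule o_bij[of swap12]) (auto simp: fun_eq_iff swap12_def)

definition permute_op :: "(('m::finite) \<Rightarrow> ('n::finite)) \<Rightarrow> 'n op \<Rightarrow> 'm op" where
  "permute_op \<sigma> X = (\<chi> p q. X $ (\<sigma> p) $ (\<sigma> q))"

lemma permute_op_mult: "bij \<sigma> \<Longrightarrow> permute_op \<sigma> (X ** Y) = permute_op \<sigma> X ** permute_op \<sigma> Y"
proof -
  assume b: "bij \<sigma>"
  have "(\<Sum>s\<in>UNIV. X $ \<sigma> p $ \<sigma> s * Y $ \<sigma> s $ \<sigma> q) = (\<Sum>t\<in>UNIV. X $ \<sigma> p $ t * Y $ t $ \<sigma> q)" for p q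
    by (rule sum.reindex_bij_betw[OF b])
  then show ?thesis by (simp add: permute_op_def matrix_matrix_mult_def vec_eq_iff)
qed

lemma permute_op_add: "permute_op \<sigma> (X + Y) = permute_op \<sigma> X + permute_op \<sigma> Y"
  by (simp add: permute_op_def vec_eq_iff)

lemma permute_op_smat: "permute_op \<sigma> (smat c X) = smat c (permute_op \<sigma> X)"
  by (simp add: permute_op_def smat_def vec_eq_iff)

lemma psd_permute_op:
  assumes b: "bij \<sigma>" and X: "psd X"
  shows "psd (permute_op \<sigma> X)"
  unfolding psd_def
proof
  fix x :: "complex^'a"
  define y where "y = (\<chi> t. x $ (inv \<sigma> t))"
  have xy: "x $ p = y $ \<sigma> p" for p unfolding y_def using b by (simp add: bij_is_inj)
  have "cinner_vec x (permute_op \<sigma> X *v x) = (\<Sum>p\<in>UNIV. cnj (y $ \<sigma> p) * (\<Sum>q\<in>UNIV. X $ \<sigma> p $ \<sigma> q * y $ \<sigma> q))"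
    by (simp add: cinner_vec_def matrix_vector_mult_def permute_op_def xy)
  also have "\<dots> = (\<Sum>p\<in>UNIV. cnj (y $ \<sigma> p) * (\<Sum>u\<in>UNIV. X $ \<sigma> p $ u * y $ u))"
    by (rule sum.cong[OF refl]) (simp add: sum.reindex_bij_betw[OF b, of "\<lambda>u. X $ _ $ u * y $ u"])
  also have "\<dots> = cinner_vec y (X *v y)"
    unfolding cinner_vec_def matrix_vector_mult_def vec_lambda_beta
    by (rule sum.reindex_bij_betw[OF b, of "\<lambda>t. cnj (y $ t) * (\<Sum>u\<in>UNIV. X $ t $ u * y $ u)"])
  finally show "Im (cinner_vec x (permute_op \<sigma> X *v x)) = 0 \<and> 0 \<le> Re (cinner_vec x (permute_op \<sigma> X *v x))"
    using X unfolding psd_def by simp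
qed

lemma mtrace_permute_op: "bij \<sigma> \<Longrightarrow> mtrace (permute_op \<sigma> X) = mtrace X"
  unfolding mtrace_def permute_op_def vec_lambda_beta by (rule sum.reindex_bij_betw)

lemma ext_mid_eq_permute_op: "ext_mid \<Phi> X = permute_op swap12 (ext_first \<Phi> (permute_op swap12 X))"
  by (simp add: ext_mid_def ext_first_def permute_op_def swap12_def vec_eq_iff)

lemma permute_op_swap12_embAC: "permute_op swap12 (embAC A) = emb_snd A"
  by (auto simp: permute_op_def swap12_def embAC_def emb_op_def vec_eq_iff)

lemma permute_op_swap12_emb_snd: "permute_op swap12 (emb_snd A) = embAC A"
  by (auto simp: permute_op_def swap12_def embAC_def emb_op_def vec_eq_iff)

lemma ext_mid_embBC: "ext_mid \<Phi> (embBC T) = embBC (ext_first \<Phi> T)"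
  by (simp add: ext_mid_def ext_first_def embBC_def vec_eq_iff if_distrib[of "\<lambda>y. y * _"] cong: if_cong)

lemma ext_first_embAC: "ext_first \<Phi> (embAC T) = embAC (ext_first \<Phi> T)"
  by (simp add: ext_first_def embAC_def vec_eq_iff if_distrib[of "\<lambda>y. y * _"] cong: if_cong)

definition local_ptp_map ::
    "(('n::finite) op \<Rightarrow> ('m::finite) op) \<Rightarrow> (('s::finite) op \<Rightarrow> 'n op) \<Rightarrow> ('s op \<Rightarrow> 'm op) \<Rightarrow> bool"
  where "local_ptp_map \<Psi> E E' \<longleftrightarrow>
     (\<forall>X Y. \<Psi> (X + Y) = \<Psi> X + \<Psi> Y) \<and> (\<forall>c X. \<Psi> (smat c X) = smat c (\<Psi> X)) \<and>
     (\<forall>X. psd X \<longrightarrow> psd (\<Psi> X)) \<and> (\<forall>X. mtrace (\<Psi> X) = mtrace X) \<and>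
     (\<forall>U Y V. \<Psi> (E U ** Y ** E V) = E' U ** \<Psi> Y ** E' V)"

lemma local_ptp_map_ext_first:
  "quantum_channel \<Phi> \<Longrightarrow> local_ptp_map (ext_first \<Phi>) emb_snd emb_snd"
  unfolding local_ptp_map_def
  by (simp add: ext_first_add ext_first_smat psd_ext_first mtrace_ext_first ext_first_emb_snd_mult)

lemma local_ptp_map_ext_mid:
  fixes \<Phi> :: "('b::finite) op \<Rightarrow> ('b2::finite) op"
  assumes "quantum_channel \<Phi>"
  shows "local_ptp_map (ext_mid \<Phi> :: (('a::finite) \<times> 'b \<times> ('c::finite)) op \<Rightarrow> _) embAC embAC"
proof -
  have "local_ptp_map (ext_first \<Phi> :: ('b \<times> 'a \<times> 'c) op \<Rightarrow> _) emb_snd emb_snd"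
    by (rule local_ptp_map_ext_first[OF assms])
  then show ?thesis
    unfolding local_ptp_map_def ext_mid_eq_permute_op
    by (simp add: permute_op_add permute_op_smat bij_swap12 psd_permute_op mtrace_permute_op
        permute_op_mult permute_op_swap12_embAC permute_op_swap12_emb_snd)
qed

section \<open>Monotonicity of the sandwiched norm\<close>

definition loewner_le :: "('n::finite) op \<Rightarrow> 'n op \<Rightarrow> bool" where
  "loewner_le A B \<longleftrightarrow> psd (B - A)"

lemma smat_mult_vec: "smat c A *v z = c *s (A *v z)"
  by (simp add: smat_def vec_eq_iff matrix_vector_mult_def sum_distrib_left mult_ac)

lemma cinner_vec_adj_conj: "cinner_vec z ((adj B ** Z ** B) *v z) = cinner_vec (B *v z) (Z *v (B *v z))"
  by (simp add: cinner_vec_adj matrix_vector_mul_assoc[symmetric])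

lemma hermitian_adj_conj: "hermitian Z \<Longrightarrow> hermitian (adj B ** Z ** B)"
  by (simp add: hermitian_def adj_mult matrix_mul_assoc)

lemma loewner_le_smat_iff:
  assumes "hermitian A" "hermitian T"
  shows "loewner_le A (smat (complex_of_real c) T) \<longleftrightarrow>
    (\<forall>z. Re (cinner_vec z (A *v z)) \<le> c * Re (cinner_vec z (T *v z)))"
proof -
  have "cinner_vec z ((smat (complex_of_real c) T - A) *v z)
      = complex_of_real c * cinner_vec z (T *v z) - cinner_vec z (A *v z)" for z
    by (simp add: smat_mult_vec matrix_vector_mult_diff_rdistrib cinner_vec_diff_right cinner_vec_scale_right)
  then show ?thesis
    using hermitian_qform_real[OF assms(1)] hermitian_qform_real[OF assms(2)]
    unfolding loewner_le_def psd_def by simp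
qed

lemma mult_inverse_pair:
  assumes "A ** Ainv = mat 1" "B ** Binv = mat 1"
  shows "(A ** B) ** (Binv ** Ainv) = mat 1"
proof -
  have "(A ** B) ** (Binv ** Ainv) = A ** (B ** Binv) ** Ainv" by (simp add: matrix_mul_assoc)
  then show ?thesis using assms by simp
qed

text \<open>For S = X^(-e_X/2) Y^(-e_Y/2) and e_Z = 1 this is exp (Delta_max \<rho> X Y Z).\<close>

definition sandwich_norm :: "('n::finite) op \<Rightarrow> 'n op \<Rightarrow> 'n op \<Rightarrow> real" where
  "sandwich_norm \<rho> S Z = opnorm (mpow \<rho> (1/2) ** (S ** mpow Z (-1) ** adj S) ** mpow \<rho> (1/2))"

lemma sandwich_norm_eq:
  assumes "hermitian \<rho>" "hermitian Z"
  shows "sandwich_norm \<rho> S Z = (opnorm (mpow Z (-1/2) ** adj S ** mpow \<rho> (1/2)))^2"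
proof -
  have "adj (mpow Z (-1/2) ** adj S ** mpow \<rho> (1/2)) = mpow \<rho> (1/2) ** S ** mpow Z (-1/2)"
    using hermitian_mpow[OF assms(1)] hermitian_mpow[OF assms(2)]
    by (simp add: adj_mult hermitian_def matrix_mul_assoc)
  moreover have "mpow Z (-1) = mpow Z (-1/2) ** mpow Z (-1/2)"
    using mpow_add[OF assms(2)] by simp
  ultimately show ?thesis
    unfolding sandwich_norm_def opnorm_adj_mult_self[symmetric] by (simp add: matrix_mul_assoc)
qed

lemma loewner_le_sandwich_norm:
  assumes \<rho>: "psd \<rho>" and Z: "posdef Z" and S: "S ** Sinv = mat 1"
  shows "loewner_le \<rho> (smat (sandwich_norm \<rho> S Z) (adj Sinv ** Z ** Sinv))"
proof -
  have hZ: "hermitian Z" using Z by (simp add: posdef_def)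
  define P where "P = mpow \<rho> (1/2)"
  define G where "G = mpow Z (-1/2)"
  define H where "H = mpow Z (1/2)"
  define X where "X = G ** adj S ** P"
  have adjX: "adj X = P ** S ** G"
    using hermitian_mpow[OF hZ] hermitian_mpow[OF psd_hermitian[OF \<rho>]]
    unfolding X_def P_def G_def by (simp add: adj_mult hermitian_def matrix_mul_assoc)
  have GH: "G ** H = mat 1" unfolding G_def H_def by (rule mpow_inverse[OF Z]) simp
  have "adj X ** (H ** Sinv) = P ** S ** (G ** H) ** Sinv" by (simp add: adjX matrix_mul_assoc)
  also have "\<dots> = P" by (simp add: GH) (simp add: matrix_mul_assoc[symmetric] S)
  finally have adjX_inv: "adj X ** (H ** Sinv) = P" .
  have bound: "Re (cinner_vec z (\<rho> *v z)) \<le> (opnorm X)^2 * Re (cinner_vec z ((adj Sinv ** Z ** Sinv) *v z))" for z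
  proof -
    define y where "y = H *v (Sinv *v z)"
    have "P *v z = adj X *v y"
      by (simp add: y_def matrix_vector_mul_assoc adjX_inv)
    then have "norm (P *v z) \<le> opnorm X * norm y"
      using norm_matrix_vector_le_opnorm[of "adj X" y] by (simp add: opnorm_adj)
    then have "(norm (P *v z))^2 \<le> (opnorm X * norm y)^2"
      by (rule power_mono) simp
    then have "(norm (P *v z))^2 \<le> (opnorm X)^2 * (norm y)^2"
      by (simp add: power_mult_distrib)
    moreover have "Re (cinner_vec z (\<rho> *v z)) = (norm (P *v z))^2"
      using psd_qform_eq_norm_mpow_half[OF \<rho>, of z] unfolding P_def by simp
    moreover have "cinner_vec z ((adj Sinv ** Z ** Sinv) *v z) = complex_of_real ((norm y)^2)"
      using hermitian_mult_self_qform[OF hermitian_mpow[OF hZ, of "1/2"], of "Sinv *v z"]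
        mpow_half_mult_self[OF posdef_psd[OF Z]]
      by (simp add: cinner_vec_adj_conj y_def H_def)
    ultimately show ?thesis by simp
  qed
  have "sandwich_norm \<rho> S Z = (opnorm X)^2"
    unfolding X_def P_def G_def by (rule sandwich_norm_eq[OF psd_hermitian[OF \<rho>] hZ])
  with bound show ?thesis
    unfolding loewner_le_smat_iff[OF psd_hermitian[OF \<rho>] hermitian_adj_conj[OF hZ]] by simp
qed

lemma sandwich_norm_le_of_loewner_le:
  assumes \<rho>: "psd \<rho>" and Z: "psd Z" and S: "Sinv ** S = mat 1" and c: "c \<ge> 0"
    and le: "loewner_le \<rho> (smat (complex_of_real c) (adj Sinv ** Z ** Sinv))"
  shows "sandwich_norm \<rho> S Z \<le> c"
proof -
  have hZ: "hermitian Z" by (rule psd_hermitian[OF Z])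
  define P where "P = mpow \<rho> (1/2)"
  define G where "G = mpow Z (-1/2)"
  define X where "X = G ** adj S ** P"
  have hG: "adj G = G" using hermitian_mpow[OF hZ] unfolding G_def hermitian_def .
  have adjX: "adj X = P ** S ** G"
    using hermitian_mpow[OF hZ] hermitian_mpow[OF psd_hermitian[OF \<rho>]]
    unfolding X_def P_def G_def by (simp add: adj_mult hermitian_def matrix_mul_assoc)
  have bound: "Re (cinner_vec z (\<rho> *v z)) \<le> c * Re (cinner_vec (Sinv *v z) (Z *v (Sinv *v z)))" for z
    using le unfolding loewner_le_smat_iff[OF psd_hermitian[OF \<rho>] hermitian_adj_conj[OF hZ]]
    by (simp add: cinner_vec_adj_conj)
  have "G ** Z ** G = mpow Z (-1/2) ** mpow Z 1 ** mpow Z (-1/2)"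
    unfolding G_def mpow_one[OF Z] ..
  also have "\<dots> = mpow Z 0" by (simp add: mpow_add[OF hZ])
  finally have GZG: "G ** Z ** G = mpow Z 0" .
  have "norm (adj X *v y) \<le> sqrt c * norm y" for y
  proof -
    define z where "z = S *v (G *v y)"
    have "(norm (adj X *v y))^2 = Re (cinner_vec z (\<rho> *v z))"
      using psd_qform_eq_norm_mpow_half[OF \<rho>, of z]
      by (simp add: z_def P_def adjX matrix_vector_mul_assoc matrix_mul_assoc)
    also have "\<dots> \<le> c * Re (cinner_vec (G *v y) (Z *v (G *v y)))"
      using bound[of z] S by (simp add: z_def matrix_vector_mul_assoc matrix_mul_assoc)
    also have "cinner_vec (G *v y) (Z *v (G *v y)) = cinner_vec y (mpow Z 0 *v y)"
      unfolding cinner_vec_adj_conj[symmetric] hG GZG ..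
    also have "c * Re (cinner_vec y (mpow Z 0 *v y)) \<le> (sqrt c * norm y)^2"
      using mult_left_mono[OF qform_mpow_zero_le[OF hZ] c] c by (simp add: power_mult_distrib)
    finally show ?thesis
      by (rule power2_le_imp_le) (simp add: c)
  qed
  then have "opnorm (adj X) \<le> sqrt c" by (rule opnorm_le)
  then have "(opnorm X)^2 \<le> c"
    using power_mono[OF _ opnorm_nonneg, of X "sqrt c" 2] c by (simp add: opnorm_adj)
  then show ?thesis
    unfolding sandwich_norm_eq[OF psd_hermitian[OF \<rho>] hZ] X_def G_def P_def .
qed

lemma loewner_le_support:
  assumes \<rho>: "psd \<rho>" and Z: "psd Z" and S: "S ** Sinv = mat 1" "Sinv ** S = mat 1"
    and le: "loewner_le \<rho> (smat (complex_of_real c) (adj Sinv ** Z ** Sinv))"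
  shows "mpow \<rho> (1/2) ** S ** mpow Z 0 ** Sinv = mpow \<rho> (1/2)"
proof -
  have hZ: "hermitian Z" by (rule psd_hermitian[OF Z])
  define P where "P = mpow \<rho> (1/2)"
  define Q where "Q = mpow Z 0"
  define H where "H = mpow Z (1/2)"
  have HQ: "H ** Q = H" unfolding H_def Q_def by (simp add: mpow_add[OF hZ])
  have bound: "Re (cinner_vec z (\<rho> *v z)) \<le> c * Re (cinner_vec (Sinv *v z) (Z *v (Sinv *v z)))" for z
    using le unfolding loewner_le_smat_iff[OF psd_hermitian[OF \<rho>] hermitian_adj_conj[OF hZ]]
    by (simp add: cinner_vec_adj_conj)
  have support: "P *v z = (P ** S ** Q ** Sinv) *v z" for z
  proof -
    define w where "w = Sinv *v z"
    define z2 where "z2 = S *v (w - Q *v w)"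
    have "H *v (Sinv *v z2) = 0"
      by (simp add: z2_def matrix_vector_mul_assoc matrix_mul_assoc S matrix_vector_mult_diff_distrib HQ)
    then have "cinner_vec (Sinv *v z2) (Z *v (Sinv *v z2)) = 0"
      using hermitian_mult_self_qform[OF hermitian_mpow[OF hZ, of "1/2"], of "Sinv *v z2"]
        mpow_half_mult_self[OF Z] by (simp add: H_def)
    then have "Re (cinner_vec z2 (\<rho> *v z2)) \<le> 0" using bound[of z2] by simp
    then have "P *v z2 = 0"
      using psd_qform_eq_norm_mpow_half[OF \<rho>, of z2] unfolding P_def by simp
    have "z = S *v (Q *v w) + z2"
      by (simp add: z2_def w_def matrix_vector_mult_diff_distrib matrix_vector_mul_assoc S)
    then have "P *v z = P *v (S *v (Q *v w)) + P *v z2"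
      by (metis matrix_vector_right_distrib)
    also have "\<dots> = (P ** S ** Q ** Sinv) *v z"
      by (simp add: \<open>P *v z2 = 0\<close> w_def matrix_vector_mul_assoc matrix_mul_assoc)
    finally show ?thesis .
  qed
  show ?thesis unfolding P_def[symmetric] Q_def[symmetric] matrix_eq by (simp add: support)
qed

text \<open>Needed because ln 0 = 0: without it the final ln-inequality could fail.\<close>

lemma sandwich_norm_pos:
  assumes \<rho>: "psd \<rho>" "\<rho> \<noteq> 0" and Z: "psd Z" and S: "S ** Sinv = mat 1" "Sinv ** S = mat 1"
    and le: "loewner_le \<rho> (smat (complex_of_real c) (adj Sinv ** Z ** Sinv))"
  shows "sandwich_norm \<rho> S Z > 0"
proof (rule ccontr)
  have hZ: "hermitian Z" by (rule psd_hermitian[OF Z])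
  define P where "P = mpow \<rho> (1/2)"
  assume "\<not> sandwich_norm \<rho> S Z > 0"
  then have "mpow Z (-1/2) ** adj S ** P = 0"
    unfolding sandwich_norm_eq[OF psd_hermitian[OF \<rho>(1)] hZ] P_def by (simp add: opnorm_eq_0_iff)
  then have "adj (mpow Z (-1/2) ** adj S ** P) = 0" by (simp add: adj_def vec_eq_iff)
  then have PSG: "P ** S ** mpow Z (-1/2) = 0"
    using hermitian_mpow[OF hZ] hermitian_mpow[OF psd_hermitian[OF \<rho>(1)]]
    unfolding P_def by (simp add: adj_mult hermitian_def matrix_mul_assoc)
  have "mpow Z (-1/2) ** mpow Z (1/2) = mpow Z 0" by (simp add: mpow_add[OF hZ])
  then have "P ** S ** mpow Z 0 = P ** S ** mpow Z (-1/2) ** mpow Z (1/2)"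
    by (simp only: matrix_mul_assoc[symmetric])
  then have "P ** S ** mpow Z 0 = 0" by (simp only: PSG) (simp add: matrix_matrix_mult_def vec_eq_iff)
  then have "P = 0"
    using loewner_le_support[OF \<rho>(1) Z S le] unfolding P_def by simp
  then have "\<rho> = 0"
    using mpow_half_mult_self[OF \<rho>(1)] unfolding P_def by simp
  with \<rho>(2) show False ..
qed

lemma sandwich_norm_mono:
  assumes \<rho>: "posdef \<rho>" and Z: "posdef Z" and S: "S ** Sinv = mat 1"
    and \<rho>': "psd \<rho>'" "\<rho>' \<noteq> 0" and Z': "psd Z'" and S': "S' ** Sinv' = mat 1" "Sinv' ** S' = mat 1"
    and transfer: "\<And>c. loewner_le \<rho> (smat (complex_of_real c) (adj Sinv ** Z ** Sinv)) \<Longrightarrow>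
      loewner_le \<rho>' (smat (complex_of_real c) (adj Sinv' ** Z' ** Sinv'))"
  shows "ln (sandwich_norm \<rho>' S' Z') \<le> ln (sandwich_norm \<rho> S Z)"
proof -
  define c where "c = sandwich_norm \<rho> S Z"
  have "c \<ge> 0" unfolding c_def sandwich_norm_def by (rule opnorm_nonneg)
  have le: "loewner_le \<rho>' (smat (complex_of_real c) (adj Sinv' ** Z' ** Sinv'))"
    unfolding c_def by (intro transfer loewner_le_sandwich_norm[OF posdef_psd[OF \<rho>] Z S])
  show ?thesis
    using sandwich_norm_le_of_loewner_le[OF \<rho>'(1) Z' S'(2) \<open>c \<ge> 0\<close> le]
      sandwich_norm_pos[OF \<rho>' Z' S' le]
    unfolding c_def by simp
qed

lemma local_ptp_map_loewner_le:
  assumes \<Psi>: "local_ptp_map \<Psi> E E'" and le: "loewner_le A B"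
  shows "loewner_le (\<Psi> A) (\<Psi> B)"
proof -
  have "\<Psi> (B - A + A) = \<Psi> (B - A) + \<Psi> A" using \<Psi> unfolding local_ptp_map_def by blast
  then have "\<Psi> (B - A) = \<Psi> B - \<Psi> A" by (simp add: eq_diff_eq)
  moreover have "psd (\<Psi> (B - A))" using \<Psi> le unfolding local_ptp_map_def loewner_le_def by blast
  ultimately show ?thesis unfolding loewner_le_def by simp
qed

lemma sandwich_norm_local_ptp_mono:
  assumes \<Psi>: "local_ptp_map \<Psi> E E'" and E: "ampliation E" and E': "ampliation E'"
    and \<rho>: "posdef \<rho>" and Z: "posdef Z" and S: "S ** Sinv = mat 1" "Sinv ** S = mat 1"
  shows "ln (sandwich_norm (\<Psi> \<rho>) (E' S) (\<Psi> Z)) \<le> ln (sandwich_norm \<rho> (E S) Z)"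
proof (rule sandwich_norm_mono[OF \<rho> Z, where Sinv = "E Sinv" and Sinv' = "E' Sinv"])
  have \<Psi>_psd: "\<And>X. psd X \<Longrightarrow> psd (\<Psi> X)" and \<Psi>_tr: "\<And>X. mtrace (\<Psi> X) = mtrace X"
    and \<Psi>_smat: "\<And>c X. \<Psi> (smat c X) = smat c (\<Psi> X)"
    and \<Psi>_local: "\<And>U Y V. \<Psi> (E U ** Y ** E V) = E' U ** \<Psi> Y ** E' V"
    using \<Psi> unfolding local_ptp_map_def by blast+
  have E_mult: "\<And>X Y. E X ** E Y = E (X ** Y)" "E (mat 1) = mat 1" "\<And>X. adj (E X) = E (adj X)"
    using E unfolding ampliation_def by blast+
  have E'_mult: "\<And>X Y. E' X ** E' Y = E' (X ** Y)" "E' (mat 1) = mat 1" "\<And>X. adj (E' X) = E' (adj X)"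
    using E' unfolding ampliation_def by blast+
  show "E S ** E Sinv = mat 1" "E' S ** E' Sinv = mat 1" "E' Sinv ** E' S = mat 1"
    by (simp_all add: E_mult E'_mult S)
  show "psd (\<Psi> \<rho>)" "psd (\<Psi> Z)" using \<Psi>_psd posdef_psd \<rho> Z by blast+
  show "\<Psi> \<rho> \<noteq> 0"
    using \<Psi>_tr[of \<rho>] mtrace_posdef_nonzero[OF \<rho>] by (auto simp: mtrace_def)
  fix c
  assume "loewner_le \<rho> (smat (complex_of_real c) (adj (E Sinv) ** Z ** E Sinv))"
  then have "loewner_le (\<Psi> \<rho>) (\<Psi> (smat (complex_of_real c) (E (adj Sinv) ** Z ** E Sinv)))"
    unfolding E_mult(3) by (rule local_ptp_map_loewner_le[OF \<Psi>])
  then show "loewner_le (\<Psi> \<rho>) (smat (complex_of_real c) (adj (E' Sinv) ** \<Psi> Z ** E' Sinv))"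
    by (simp add: \<Psi>_smat \<Psi>_local E'_mult(3))
qed

lemma Delta_max_eq_sandwich_norm:
  assumes E: "ampliation E" and A: "hermitian A1" "hermitian A2"
    and XY: "top_op X = E A1" "top_op Y = E A2" and Z: "top_e Z = 1"
  shows "Delta_max \<rho> X Y Z
    = ln (sandwich_norm \<rho> (E (mpow A1 (- top_e X / 2) ** mpow A2 (- top_e Y / 2))) (top_op Z))"
proof -
  have mult: "\<And>U V. E U ** E V = E (U ** V)" and adj: "\<And>U. adj (E U) = E (adj U)"
    using E unfolding ampliation_def by blast+
  have "adj (mpow A1 s) = mpow A1 s" "adj (mpow A2 s) = mpow A2 s" for s
    using hermitian_mpow[OF A(1)] hermitian_mpow[OF A(2)] by (simp_all add: hermitian_def)
  then show ?thesis
    unfolding Delta_max_def Kminus1_def sandwich_norm_def XY Z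
    by (simp add: mpow_ampliation[OF E] A adj_mult adj mult[symmetric] matrix_mul_assoc)
qed

lemma Delta_max_local_ptp_mono:
  assumes \<Psi>: "local_ptp_map \<Psi> E E'" and E: "ampliation E" and E': "ampliation E'"
    and pd: "posdef \<rho>" "posdef A1" "posdef A2" "posdef (top_op Z)"
    and XYZ: "top_op X = E A1" "top_op Y = E A2" "top_e Z = 1"
    and XYZ': "top_op X' = E' A1" "top_op Y' = E' A2" "top_e Z' = 1" "top_op Z' = \<Psi> (top_op Z)"
    and e: "top_e X' = top_e X" "top_e Y' = top_e Y"
  shows "Delta_max (\<Psi> \<rho>) X' Y' Z' \<le> Delta_max \<rho> X Y Z"
proof -
  have h: "hermitian A1" "hermitian A2" using pd by (simp_all add: posdef_def)
  define S where "S = mpow A1 (- top_e X / 2) ** mpow A2 (- top_e Y / 2)"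
  define Sinv where "Sinv = mpow A2 (top_e Y / 2) ** mpow A1 (top_e X / 2)"
  have "S ** Sinv = mat 1" "Sinv ** S = mat 1"
    unfolding S_def Sinv_def by (intro mult_inverse_pair mpow_inverse pd; simp)+
  then show ?thesis
    unfolding Delta_max_eq_sandwich_norm[OF E h XYZ] Delta_max_eq_sandwich_norm[OF E' h XYZ'(1-3)]
      XYZ'(4) e S_def[symmetric]
    by (rule sandwich_norm_local_ptp_mono[OF \<Psi> E E' pd(1,4)])
qed

theorem mainTheorem15:
  fixes \<rho> :: "('a::finite \<times> 'b::finite \<times> 'c::finite) op"
    and \<tau> :: "('a \<times> 'c) op" and \<theta> :: "('b \<times> 'c) op" and \<omega> :: "'c op"
    and N :: "'a op \<Rightarrow> ('a2::finite) op" and M :: "'b op \<Rightarrow> ('b2::finite) op"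
  assumes "posdef \<rho>" "density \<rho>" "posdef \<tau>" "density \<tau>"
    and "posdef \<theta>" "density \<theta>" "posdef \<omega>" "density \<omega>"
    and "quantum_channel N" and "quantum_channel M"
  shows "(Delta_max \<rho> (Tau (embAC \<tau>)) (Omega (embC \<omega>)) (Theta (embBC \<theta>))
      \<ge> Delta_max (ext_mid M \<rho>) (Tau (embAC \<tau>)) (Omega (embC \<omega>)) (Theta (embBC (ext_first M \<theta>)))) \<and>
   (Delta_max \<rho> (Omega (embC \<omega>)) (Tau (embAC \<tau>)) (Theta (embBC \<theta>))
      \<ge> Delta_max (ext_mid M \<rho>) (Omega (embC \<omega>)) (Tau (embAC \<tau>)) (Theta (embBC (ext_first M \<theta>)))) \<and>
   (Delta_max \<rho> (Omega (embC \<omega>)) (Theta (embBC \<theta>)) (Tau (embAC \<tau>))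
      \<ge> Delta_max (ext_first N \<rho>) (Omega (embC \<omega>)) (Theta (embBC \<theta>)) (Tau (embAC (ext_first N \<tau>)))) \<and>
   (Delta_max \<rho> (Theta (embBC \<theta>)) (Omega (embC \<omega>)) (Tau (embAC \<tau>))
      \<ge> Delta_max (ext_first N \<rho>) (Theta (embBC \<theta>)) (Omega (embC \<omega>)) (Tau (embAC (ext_first N \<tau>))))"
proof -
  have mid: "local_ptp_map (ext_mid M :: ('a \<times> 'b \<times> 'c) op \<Rightarrow> _) embAC embAC"
    by (rule local_ptp_map_ext_mid[OF assms(10)])
  have first: "local_ptp_map (ext_first N :: ('a \<times> 'b \<times> 'c) op \<Rightarrow> _) embBC embBC"
    unfolding embBC_eq_emb_snd by (rule local_ptp_map_ext_first[OF assms(9)])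
  have \<omega>: "posdef (emb_snd \<omega> :: ('a \<times> 'c) op)" "posdef (emb_snd \<omega> :: ('b \<times> 'c) op)"
    using posdef_ampliation[OF ampliation_emb_snd assms(7)] by blast+
  have \<tau>\<theta>: "posdef (embAC \<tau> :: ('a \<times> 'b \<times> 'c) op)" "posdef (embBC \<theta> :: ('a \<times> 'b \<times> 'c) op)"
    using posdef_ampliation[OF ampliation_embAC assms(3)] posdef_ampliation[OF ampliation_embBC assms(5)]
    by blast+
  note mono_mid = Delta_max_local_ptp_mono[OF mid ampliation_embAC ampliation_embAC assms(1)]
  note mono_first = Delta_max_local_ptp_mono[OF first ampliation_embBC ampliation_embBC assms(1)]
  note mid_simps = \<tau>\<theta> embC_eq_embAC ext_mid_embBC
  note first_simps = \<tau>\<theta> embC_eq_embBC ext_first_embAC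
  show ?thesis
  proof (intro conjI)
    show "Delta_max (ext_mid M \<rho>) (Tau (embAC \<tau>)) (Omega (embC \<omega>)) (Theta (embBC (ext_first M \<theta>)))
      \<le> Delta_max \<rho> (Tau (embAC \<tau>)) (Omega (embC \<omega>)) (Theta (embBC \<theta>))"
      by (rule mono_mid[OF assms(3) \<omega>(1)]) (simp_all add: mid_simps)
    show "Delta_max (ext_mid M \<rho>) (Omega (embC \<omega>)) (Tau (embAC \<tau>)) (Theta (embBC (ext_first M \<theta>)))
      \<le> Delta_max \<rho> (Omega (embC \<omega>)) (Tau (embAC \<tau>)) (Theta (embBC \<theta>))"
      by (rule mono_mid[OF \<omega>(1) assms(3)]) (simp_all add: mid_simps)
    show "Delta_max (ext_first N \<rho>) (Omega (embC \<omega>)) (Theta (embBC \<theta>)) (Tau (embAC (ext_first N \<tau>)))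
      \<le> Delta_max \<rho> (Omega (embC \<omega>)) (Theta (embBC \<theta>)) (Tau (embAC \<tau>))"
      by (rule mono_first[OF \<omega>(2) assms(5)]) (simp_all add: first_simps)
    show "Delta_max (ext_first N \<rho>) (Theta (embBC \<theta>)) (Omega (embC \<omega>)) (Tau (embAC (ext_first N \<tau>)))
      \<le> Delta_max \<rho> (Theta (embBC \<theta>)) (Omega (embC \<omega>)) (Tau (embAC \<tau>))"
      by (rule mono_first[OF assms(5) \<omega>(2)]) (simp_all add: first_simps)
  qed
qed

end
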